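(* Under the hypotheses of Theorem 3, for each vertex $v\in\mathcal{S}_{\mathcal{G}}'$ the set $\mathcal{S}_v=\{n:(v,n)\in\mathcal{S}\}$ satisfies $$R_D(\mathcal{S}_v)\ \ge\ B-\int_{\mathcal{F}}\operatorname{rank}\big(\mathbf{U}_{\mathcal{G}}(\mathcal{S}_{\mathcal{G}}'\setminus\{v\},\mathcal{I}_f)\big)\,df.$$
   Context: Same setting as Theorem 3: $\mathcal{G}$ undirected graph with $N$ vertices, orthonormal Laplacian eigenvector matrix $\mathbf{U}_{\mathcal{G}}$ (columns $\mathbf{u}_i$), $\mathbf{U}_{\mathcal{G}}(A,C)$ row/column submatrix; DTVGS with $\ell^2(\mathbb{Z})$ vertex sequences; JFT $\mathcal{F}_{\mathcal{J}}(\mathbf{X})(i,f)=\sum_v\mathbf{u}_i(v)\sum_n\mathbf{X}(v,n)e^{-j2\pi fn}$ in normalized frequency $f\in[-\tfrac12,\tfrac12)$; supports $\mathcal{F}_i$, $\mathcal{F}=\bigcup\mathcal{F}_i$, $\mathcal{I}_f=\{i:f\in\mathcal{F}_i\}$, $\mathcal{I}=\bigcup_f\mathcal{I}_f$, $B_{\mathcal{G}}=|\mathcal{I}|$, $B=\sum_i\mu(\mathcal{F}_i)$; $\mathcal{BL}_D$ space of DTVGS with JFT vanishing off the $\mathcal{F}_i$; $\mathcal{S}_{\mathcal{G}}'$ with $|\mathcal{S}_{\mathcal{G}}'|=B_{\mathcal{G}}$, $\operatorname{rank}\mathbf{U}_{\mathcal{G}}(\mathcal{S}_{\mathcal{G}}',\mathcal{I})=B_{\mathcal{G}}$;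 $\mathcal{S}\subseteq\mathcal{S}_{\mathcal{G}}'\times\mathbb{Z}$ stable (two-sided energy inequality with constants $0<A\le A'<\infty$); $R_D(\mathcal{S}_v)=\liminf_{n\to\infty}|\mathcal{S}_v\cap[-n,n]|/(2n)$. *)

theory Defs
  imports "HOL-Analysis.Analysis"
begin

text \<open>Vertices of the graph are the elements of a finite type 'n (so N = CARD('n)).
  Matrices are indexed U $ v $ i : row = vertex v, column = eigenvector index i,
  so column i U is the Laplacian eigenvector u_i.\<close>

definition undirected_weights :: "real^'n^'n \<Rightarrow> bool" where
  "undirected_weights W \<longleftrightarrow>
     (\<forall>i j. W$i$j = W$j$i \<and> W$i$j \<ge> 0) \<and> (\<forall>i. W$i$i = 0)"

definition graph_laplacian :: "real^'n^'n \<Rightarrow> real^'n^'n" where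
  "graph_laplacian W = (\<chi> i j. (if i = j then (\<Sum>k\<in>UNIV. W$i$k) else 0) - W$i$j)"

definition laplacian_eigvecs :: "real^'n^'n \<Rightarrow> real^'n^'n \<Rightarrow> bool" where
  "laplacian_eigvecs W U \<longleftrightarrow>
     transpose U ** U = mat 1 \<and>
     (\<exists>lam :: 'n \<Rightarrow> real. \<forall>i. graph_laplacian W *v column i U = lam i *s column i U)"

text \<open>rank of the submatrix U(A,C) (rows A, columns C) = dimension of the span of
  its columns (padded with zeros outside A).\<close>
definition sub_rank :: "real^'n^'n \<Rightarrow> 'n set \<Rightarrow> 'n set \<Rightarrow> nat" where
  "sub_rank U A C = dim ((\<lambda>i. (\<chi> v. if v \<in> A then U$v$i else 0) :: real^'n) ` C)"

definition Iset :: "('n \<Rightarrow> real set) \<Rightarrow> real \<Rightarrow> 'n set" where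
  "Iset F f = {i. f \<in> F i}"

definition Iall :: "('n \<Rightarrow> real set) \<Rightarrow> 'n set" where
  "Iall F = (\<Union>f\<in>{-1/2..<1/2}. Iset F f)"

definition idtft :: "(real \<Rightarrow> complex) \<Rightarrow> int \<Rightarrow> complex" where
  "idtft G n = (LINT f:{-1/2..<1/2}|lborel. G f * exp (2 * pi * \<i> * of_real f * of_int n))"

text \<open>Band-limited DTVGS: every vertex sequence is in l^2(Z), and the JFT (an L^2 function
  of f for each i) vanishes off F_i; phrased by representing X through its JFT G.\<close>
definition BL_D :: "real^'n^'n \<Rightarrow> ('n \<Rightarrow> real set) \<Rightarrow> ('n \<Rightarrow> int \<Rightarrow> complex) \<Rightarrow> bool" where
  "BL_D U F X \<longleftrightarrow>
     (\<forall>v. (\<lambda>n. (cmod (X v n))^2) summable_on UNIV) \<and>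
     (\<exists>G :: 'n \<Rightarrow> real \<Rightarrow> complex.
        (\<forall>i. G i \<in> borel_measurable lborel \<and>
             set_integrable lborel {-1/2..<1/2} (\<lambda>f. (cmod (G i f))^2) \<and>
             (\<forall>f\<in>{-1/2..<1/2} - F i. G i f = 0)) \<and>
        (\<forall>v n. X v n = (\<Sum>i\<in>UNIV. complex_of_real (U$v$i) * idtft (G i) n)))"

definition energy_on :: "('n \<Rightarrow> int \<Rightarrow> complex) \<Rightarrow> ('n \<times> int) set \<Rightarrow> real" where
  "energy_on X S = (\<Sum>\<^sub>\<infinity>(v,n)\<in>S. (cmod (X v n))^2)"

definition stable_sampling ::
  "real^'n^'n \<Rightarrow> ('n \<Rightarrow> real set) \<Rightarrow> ('n \<times> int) set \<Rightarrow> real \<Rightarrow> real \<Rightarrow> bool" where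
  "stable_sampling U F S A A' \<longleftrightarrow> 0 < A \<and> A \<le> A' \<and>
     (\<forall>X. BL_D U F X \<longrightarrow>
        A * energy_on X UNIV \<le> energy_on X S \<and> energy_on X S \<le> A' * energy_on X UNIV)"

definition R_D :: "int set \<Rightarrow> ereal" where
  "R_D Sv = liminf (\<lambda>n::nat. ereal (real (card (Sv \<inter> {- int n..int n})) / (2 * real n)))"

end

(*
  Let E be the set of frequencies f at which deleting the row v lowers the rank of
  U(Sp, I_f).  For f in E there is a coefficient vector c(f), supported on I_f, with
  U(Sp - {v}, I_f) c(f) = 0 and U(v, I_f) c(f) = 1.  Multiplying a function g with
  spectrum in E by c(f) yields a band-limited graph signal which vanishes at every
  vertex of Sp except v, where it equals g.  Stability of S therefore makes S_v a
  sampling set for the functions with spectrum in E, and Landau's necessary density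
  condition gives R_D(S_v) >= |E|.  Since deleting a row lowers the rank by at most
  one, |E| >= B - integral of rank U(Sp - {v}, I_f) df.
*)

theory Submission
  imports Defs
begin

section \<open>Fourier series on the torus\<close>

definition torus :: "real set" where
  "torus = {-1/2..<1/2}"

abbreviation lborel_torus :: "real measure" where
  "lborel_torus \<equiv> restrict_space lborel torus"

lemma torus_sets [measurable, simp]: "torus \<in> sets borel"
  by (simp add: torus_def)

lemma finite_measure_lborel_torus: "finite_measure lborel_torus"
  by (rule finite_measureI) (simp add: emeasure_restrict_space torus_def)

lemma set_integral_torus:
  fixes g :: "real \<Rightarrow> 'b::{banach,second_countable_topology}"
  shows "set_lebesgue_integral lborel torus g = integral\<^sup>L lborel_torus g"
  unfolding set_lebesgue_integral_def by (simp add: integral_restrict_space)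

lemma set_integrable_torus_iff:
  fixes g :: "real \<Rightarrow> 'b::{banach,second_countable_topology}"
  shows "set_integrable lborel torus g \<longleftrightarrow> integrable lborel_torus g"
  unfolding set_integrable_def by (simp add: integrable_restrict_space)

lemma integral_indicator_torus:
  assumes "E \<in> sets borel" "E \<subseteq> torus"
  shows "(\<integral>x. indicator E x \<partial>lborel_torus) = measure lborel E"
proof -
  have "E \<in> sets lborel_torus"
    using assms by (simp add: sets_restrict_space_iff)
  then have "(\<integral>x. indicator E x \<partial>lborel_torus) = measure lborel_torus E"
    using finite_measure.emeasure_finite[OF finite_measure_lborel_torus] assms(2)
    by (simp add: top.not_eq_extremum Int_absorb2)
  also have "\<dots> = measure lborel E"
    using assms by (intro measure_restrict_space) auto
  finally show ?thesis .
qed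

lemma measure_le_1_if_subset_torus:
  assumes "E \<in> sets borel" "E \<subseteq> torus"
  shows "measure lborel E \<le> 1"
proof -
  have "measure lborel E = measure lborel_torus E"
    using assms by (simp add: measure_restrict_space)
  also have "\<dots> \<le> measure lborel_torus torus"
    using finite_measure.bounded_measure[OF finite_measure_lborel_torus] by simp
  also have "\<dots> = 1"
    by (simp add: measure_restrict_space torus_def)
  finally show ?thesis .
qed

definition fourier_exp :: "int \<Rightarrow> real \<Rightarrow> complex" where
  "fourier_exp k x = exp (2 * pi * \<i> * of_real x * of_int k)"

lemma continuous_on_fourier_exp [continuous_intros]: "continuous_on A (fourier_exp k)"
  unfolding fourier_exp_def by (intro continuous_intros)

lemma borel_measurable_fourier_exp [measurable]: "fourier_exp k \<in> borel_measurable borel"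
  by (intro borel_measurable_continuous_onI continuous_on_fourier_exp)

lemma norm_fourier_exp [simp]: "norm (fourier_exp k x) = 1"
proof -
  have "fourier_exp k x = exp (\<i> * complex_of_real (2 * pi * x * k))"
    unfolding fourier_exp_def by (simp add: algebra_simps)
  then show ?thesis by (simp only: norm_exp_i_times)
qed

lemma fourier_exp_mult: "fourier_exp k x * fourier_exp l x = fourier_exp (k + l) x"
  unfolding fourier_exp_def by (simp add: exp_add[symmetric] algebra_simps)

lemma cnj_fourier_exp: "cnj (fourier_exp k x) = fourier_exp (-k) x"
  unfolding fourier_exp_def by (simp add: exp_cnj)

lemma fourier_exp_0 [simp]: "fourier_exp 0 x = 1"
  unfolding fourier_exp_def by simp

lemma integral_fourier_exp:
  "(\<integral>x. fourier_exp k x \<partial>lborel_torus) = (if k = 0 then 1 else 0)"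
proof -
  have "(\<integral>x. fourier_exp k x \<partial>lborel_torus) = (LBINT x:{-1/2..<1/2}. fourier_exp k x)"
    using set_integral_torus[of "fourier_exp k"] by (simp add: torus_def)
  also have "\<dots> = (LBINT x:{-1/2..1/2}. fourier_exp k x)"
    by (rule set_integral_discrete_difference[where X="{1/2}"]) auto
  also have "\<dots> = (if k = 0 then 1 else 0)"
  proof (cases "k = 0")
    case True
    then show ?thesis by (simp add: set_integral_const measure_lborel_Icc)
  next
    case False
    define c where "c = 2 * complex_of_real pi * \<i> * of_int k"
    have "c \<noteq> 0" using False by (simp add: c_def)
    have exp_c: "fourier_exp k x = exp (c * of_real x)" for x
      unfolding fourier_exp_def c_def by (simp add: algebra_simps)
    have "(LBINT x=ereal (-1/2)..ereal (1/2). fourier_exp k x)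
        = exp (c * of_real (1/2)) / c - exp (c * of_real (-1/2)) / c"
    proof (rule interval_integral_FTC_finite)
      fix x :: real
      have "((\<lambda>z. exp (c * z) / c) has_field_derivative exp (c * of_real x)) (at (of_real x))"
        using \<open>c \<noteq> 0\<close> by (auto intro!: derivative_eq_intros)
      from has_vector_derivative_real_field[OF this]
      show "((\<lambda>x. exp (c * complex_of_real x) / c) has_vector_derivative fourier_exp k x)
          (at x within {min (-1/2) (1/2)..max (-1/2) (1/2)})"
        by (simp add: exp_c has_vector_derivative_at_within)
    qed (intro continuous_intros)
    also have "exp (c * of_real (1/2)) = exp (c * of_real (-1/2)) * exp c"
      by (simp add: exp_add[symmetric] algebra_simps)
    also have "exp c = 1"
      using exp_integer_2pi[of "of_int k"] by (simp add: c_def algebra_simps)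
    finally show ?thesis
      using False by (simp add: interval_integral_Icc)
  qed
  finally show ?thesis .
qed

definition bounded_measurable :: "(real \<Rightarrow> 'a::{banach,second_countable_topology}) \<Rightarrow> bool" where
  "bounded_measurable g \<longleftrightarrow> g \<in> borel_measurable lborel_torus \<and> (\<exists>B. \<forall>x. norm (g x) \<le> B)"

lemma bounded_measurable_integrable: "bounded_measurable g \<Longrightarrow> integrable lborel_torus g"
  unfolding bounded_measurable_def
  using finite_measure.integrable_const_bound[OF finite_measure_lborel_torus] by blast

lemma bounded_measurable_const: "bounded_measurable (\<lambda>x. c)"
  unfolding bounded_measurable_def by auto

lemma bounded_measurable_fourier_exp: "bounded_measurable (fourier_exp k)"
  unfolding bounded_measurable_def by (auto intro: measurable_restrict_space1)

lemma bounded_measurable_indicator: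
  "E \<in> sets borel \<Longrightarrow> bounded_measurable (\<lambda>x. indicator E x :: complex)"
  unfolding bounded_measurable_def
  by (auto intro!: measurable_restrict_space1 exI[of _ 1] simp: indicator_def)

lemma bounded_measurable_add:
  assumes "bounded_measurable f" "bounded_measurable g"
  shows "bounded_measurable (\<lambda>x. f x + g x)"
proof -
  obtain B C where "\<forall>x. norm (f x) \<le> B" "\<forall>x. norm (g x) \<le> C"
    using assms unfolding bounded_measurable_def by blast
  then have "\<forall>x. norm (f x + g x) \<le> B + C"
    by (meson add_mono norm_triangle_le)
  then show ?thesis
    using assms unfolding bounded_measurable_def by auto
qed

lemma bounded_measurable_sum:
  "(\<And>k. k \<in> K \<Longrightarrow> bounded_measurable (f k)) \<Longrightarrow> bounded_measurable (\<lambda>x. \<Sum>k\<in>K. f k x)"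
  by (induction K rule: infinite_finite_induct)
     (simp_all add: bounded_measurable_const bounded_measurable_add)

lemma bounded_measurable_mult:
  fixes f g :: "real \<Rightarrow> 'a::{real_normed_div_algebra,banach,second_countable_topology}"
  assumes "bounded_measurable f" "bounded_measurable g"
  shows "bounded_measurable (\<lambda>x. f x * g x)"
proof -
  obtain B C where B: "\<forall>x. norm (f x) \<le> B" and C: "\<forall>x. norm (g x) \<le> C"
    using assms unfolding bounded_measurable_def by blast
  have "norm (f x * g x) \<le> B * C" for x
    unfolding norm_mult using B C by (meson mult_mono norm_ge_zero order_trans)
  then show ?thesis
    using assms unfolding bounded_measurable_def by auto
qed

lemma bounded_measurable_cnj: "bounded_measurable f \<Longrightarrow> bounded_measurable (\<lambda>x. cnj (f x))"
  unfolding bounded_measurable_def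
  by (auto intro: measurable_compose[OF _ borel_measurable_continuous_onI]
      continuous_on_cnj continuous_on_id)

lemma bounded_measurable_norm_power2:
  "bounded_measurable g \<Longrightarrow> bounded_measurable (\<lambda>x. (norm (g x))^2)"
  unfolding bounded_measurable_def by (auto intro!: exI power_mono)

lemma borel_measurable_if_vanishing_off_torus:
  fixes g :: "real \<Rightarrow> 'a::{banach,second_countable_topology}"
  assumes "bounded_measurable g" "\<And>x. x \<notin> torus \<Longrightarrow> g x = 0"
  shows "g \<in> borel_measurable lborel"
proof -
  have "g = (\<lambda>x. indicator torus x *\<^sub>R g x)"
    using assms(2) by (force simp: indicator_def)
  then show ?thesis
    using assms(1) borel_measurable_restrict_space_iff[of torus lborel g]
    unfolding bounded_measurable_def by simp
qed

lemmas bounded_measurable_intros =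
  bounded_measurable_const bounded_measurable_fourier_exp bounded_measurable_indicator
  bounded_measurable_add bounded_measurable_sum bounded_measurable_mult bounded_measurable_cnj
  bounded_measurable_norm_power2

definition fourier_coeff :: "(real \<Rightarrow> complex) \<Rightarrow> int \<Rightarrow> complex" where
  "fourier_coeff g n = (\<integral>x. g x * fourier_exp n x \<partial>lborel_torus)"

lemma idtft_eq_fourier_coeff: "idtft G n = fourier_coeff G n"
  using set_integral_torus[of "\<lambda>x. G x * fourier_exp n x"]
  by (simp add: idtft_def fourier_coeff_def fourier_exp_def torus_def)

lemma fourier_coeff_sum:
  "(\<And>k. k \<in> K \<Longrightarrow> bounded_measurable (f k)) \<Longrightarrow>
    fourier_coeff (\<lambda>x. \<Sum>k\<in>K. f k x) n = (\<Sum>k\<in>K. fourier_coeff (f k) n)"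
  unfolding fourier_coeff_def
  by (simp add: sum_distrib_right Bochner_Integration.integral_sum
      bounded_measurable_integrable bounded_measurable_intros)

lemma fourier_coeff_cmult: "fourier_coeff (\<lambda>x. c * g x) n = c * fourier_coeff g n"
  unfolding fourier_coeff_def by (simp add: mult.assoc)

lemma fourier_coeff_mult_fourier_exp:
  "fourier_coeff (\<lambda>x. g x * fourier_exp k x) n = fourier_coeff g (n + k)"
  unfolding fourier_coeff_def by (simp add: mult.assoc fourier_exp_mult add.commute)

definition trig_poly :: "int set \<Rightarrow> (int \<Rightarrow> complex) \<Rightarrow> real \<Rightarrow> complex" where
  "trig_poly K c x = (\<Sum>k\<in>K. c k * fourier_exp (-k) x)"

lemma bounded_measurable_trig_poly: "bounded_measurable (trig_poly K c)"
  unfolding trig_poly_def by (intro bounded_measurable_intros)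

lemma trig_poly_add: "trig_poly K (\<lambda>k. a k + b k) x = trig_poly K a x + trig_poly K b x"
  unfolding trig_poly_def by (simp add: distrib_right sum.distrib)

lemma integral_mult_cnj_trig_poly:
  assumes "bounded_measurable g"
  shows "(\<integral>x. g x * cnj (trig_poly K c x) \<partial>lborel_torus) = (\<Sum>k\<in>K. cnj (c k) * fourier_coeff g k)"
proof -
  have "(\<integral>x. g x * cnj (trig_poly K c x) \<partial>lborel_torus)
      = (\<integral>x. (\<Sum>k\<in>K. cnj (c k) * (g x * fourier_exp k x)) \<partial>lborel_torus)"
    unfolding trig_poly_def by (simp add: sum_distrib_left cnj_fourier_exp algebra_simps)
  also have "\<dots> = (\<Sum>k\<in>K. cnj (c k) * fourier_coeff g k)"
    unfolding fourier_coeff_def using assms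
    by (simp add: Bochner_Integration.integral_sum bounded_measurable_integrable
        bounded_measurable_intros)
  finally show ?thesis .
qed

lemma fourier_coeff_trig_poly:
  assumes "finite K"
  shows "fourier_coeff (trig_poly K c) n = (if n \<in> K then c n else 0)"
proof -
  have "fourier_coeff (trig_poly K c) n = (\<Sum>k\<in>K. c k * (if n = k then 1 else 0))"
    unfolding trig_poly_def fourier_coeff_def
    by (simp add: sum_distrib_right mult.assoc fourier_exp_mult integral_fourier_exp
        Bochner_Integration.integral_sum bounded_measurable_integrable bounded_measurable_intros)
  also have "\<dots> = (if n \<in> K then c n else 0)"
    using assms by (simp add: if_distrib cong: if_cong)
  finally show ?thesis .
qed

lemma norm_power2_eq_Re_mult_cnj: "(norm z)^2 = Re (z * cnj z)"
  by (simp add: complex_mult_cnj cmod_def)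

lemma parseval_trig_poly:
  assumes "finite K"
  shows "(\<integral>x. (norm (trig_poly K c x))^2 \<partial>lborel_torus) = (\<Sum>k\<in>K. (norm (c k))^2)"
proof -
  have "(\<integral>x. (norm (trig_poly K c x))^2 \<partial>lborel_torus)
      = Re (\<integral>x. trig_poly K c x * cnj (trig_poly K c x) \<partial>lborel_torus)"
    unfolding norm_power2_eq_Re_mult_cnj
    by (intro integral_Re bounded_measurable_integrable bounded_measurable_intros
        bounded_measurable_trig_poly)
  also have "\<dots> = (\<Sum>k\<in>K. (norm (c k))^2)"
    using assms
    by (simp add: integral_mult_cnj_trig_poly bounded_measurable_trig_poly fourier_coeff_trig_poly
        norm_power2_eq_Re_mult_cnj mult.commute)
  finally show ?thesis .
qed

lemma bessel_inequality:
  assumes g: "bounded_measurable g" and K: "finite K"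
  shows "(\<Sum>n\<in>K. (norm (fourier_coeff g n))^2) \<le> (\<integral>x. (norm (g x))^2 \<partial>lborel_torus)"
proof -
  let ?t = "trig_poly K (fourier_coeff g)"
  have i1: "integrable lborel_torus (\<lambda>x. (norm (g x))^2)"
    and i2: "integrable lborel_torus (\<lambda>x. 2 * Re (g x * cnj (?t x)))"
    and i3: "integrable lborel_torus (\<lambda>x. (norm (?t x))^2)"
    by (intro integrable_mult_right integrable_Re bounded_measurable_integrable
        bounded_measurable_intros bounded_measurable_trig_poly g)+
  have "(norm (g x - ?t x))^2 = (norm (g x))^2 - 2 * Re (g x * cnj (?t x)) + (norm (?t x))^2" for x
    unfolding norm_power2_eq_Re_mult_cnj by (simp add: algebra_simps)
  then have "(\<integral>x. (norm (g x - ?t x))^2 \<partial>lborel_torus)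
      = (\<integral>x. (norm (g x))^2 - 2 * Re (g x * cnj (?t x)) + (norm (?t x))^2 \<partial>lborel_torus)"
    by simp
  also have "\<dots>
      = (\<integral>x. (norm (g x))^2 \<partial>lborel_torus)
        - 2 * (\<integral>x. Re (g x * cnj (?t x)) \<partial>lborel_torus) + (\<integral>x. (norm (?t x))^2 \<partial>lborel_torus)"
    by (simp only: Bochner_Integration.integral_add[OF Bochner_Integration.integrable_diff[OF i1 i2] i3]
        Bochner_Integration.integral_diff[OF i1 i2] integral_mult_right_zero)
  also have "(\<integral>x. Re (g x * cnj (?t x)) \<partial>lborel_torus) = Re (\<integral>x. g x * cnj (?t x) \<partial>lborel_torus)"
    by (intro integral_Re bounded_measurable_integrable bounded_measurable_intros
        bounded_measurable_trig_poly g)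
  also have "Re (\<integral>x. g x * cnj (?t x) \<partial>lborel_torus) = (\<Sum>n\<in>K. (norm (fourier_coeff g n))^2)"
    using g by (simp add: integral_mult_cnj_trig_poly Re_sum norm_power2_eq_Re_mult_cnj mult.commute)
  also have "(\<integral>x. (norm (?t x))^2 \<partial>lborel_torus) = (\<Sum>n\<in>K. (norm (fourier_coeff g n))^2)"
    using K by (rule parseval_trig_poly)
  finally have "(\<integral>x. (norm (g x))^2 \<partial>lborel_torus) - (\<Sum>n\<in>K. (norm (fourier_coeff g n))^2)
      = (\<integral>x. (norm (g x - ?t x))^2 \<partial>lborel_torus)"
    by simp
  also have "\<dots> \<ge> 0"
    by (rule integral_nonneg_AE) simp
  finally show ?thesis by simp
qed

lemma summable_on_fourier_coeff:
  assumes "bounded_measurable g"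
  shows "(\<lambda>n. (norm (fourier_coeff g n))^2) summable_on A"
proof -
  have "(\<lambda>n. (norm (fourier_coeff g n))^2) summable_on UNIV"
    using assms bessel_inequality
    by (intro nonneg_bdd_above_summable_on bdd_aboveI2[where M="\<integral>x. (norm (g x))^2 \<partial>lborel_torus"])
      auto
  then show ?thesis
    by (rule summable_on_subset_banach) simp
qed

section \<open>Orthogonal projections in finite-dimensional coordinate spaces\<close>

definition inner_on :: "'j set \<Rightarrow> ('j \<Rightarrow> complex) \<Rightarrow> ('j \<Rightarrow> complex) \<Rightarrow> complex" where
  "inner_on J a b = (\<Sum>m\<in>J. a m * cnj (b m))"

definition norm2_on :: "'j set \<Rightarrow> ('j \<Rightarrow> complex) \<Rightarrow> real" where
  "norm2_on J a = (\<Sum>m\<in>J. (norm (a m))^2)"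

definition orthonormal_on :: "'j set \<Rightarrow> ('j \<Rightarrow> complex) set \<Rightarrow> bool" where
  "orthonormal_on J W \<longleftrightarrow> (\<forall>w\<in>W. \<forall>w'\<in>W. inner_on J w w' = (if w = w' then 1 else 0))"

definition proj_on :: "'j set \<Rightarrow> ('j \<Rightarrow> complex) set \<Rightarrow> ('j \<Rightarrow> complex) \<Rightarrow> 'j \<Rightarrow> complex" where
  "proj_on J W y = (\<lambda>m. \<Sum>w\<in>W. inner_on J y w * w m)"

lemma mult_cnj_eq_norm_power2: "z * cnj z = (complex_of_real (norm z))^2"
  using complex_norm_square[of z] by simp

lemma norm2_on_conv_inner_on: "complex_of_real (norm2_on J a) = inner_on J a a"
  unfolding norm2_on_def inner_on_def by (simp add: mult_cnj_eq_norm_power2)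

lemma norm2_on_nonneg: "0 \<le> norm2_on J a"
  unfolding norm2_on_def by (simp add: sum_nonneg)

lemma norm2_on_eq_0_iff: "finite J \<Longrightarrow> norm2_on J a = 0 \<longleftrightarrow> (\<forall>m\<in>J. a m = 0)"
  unfolding norm2_on_def by (simp add: sum_nonneg_eq_0_iff)

lemma inner_on_commute: "inner_on J b a = cnj (inner_on J a b)"
  unfolding inner_on_def by (simp add: mult.commute)

lemma inner_on_diff_left: "inner_on J (\<lambda>m. a m - b m) c = inner_on J a c - inner_on J b c"
  unfolding inner_on_def by (simp add: left_diff_distrib sum_subtractf)

lemma inner_on_diff_right: "inner_on J c (\<lambda>m. a m - b m) = inner_on J c a - inner_on J c b"
  unfolding inner_on_def by (simp add: right_diff_distrib sum_subtractf)

lemma inner_on_add_left: "inner_on J (\<lambda>m. a m + b m) c = inner_on J a c + inner_on J b c"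
  unfolding inner_on_def by (simp add: distrib_right sum.distrib)

lemma inner_on_cong: "(\<And>m. m \<in> J \<Longrightarrow> a m = a' m) \<Longrightarrow> inner_on J a b = inner_on J a' b"
  unfolding inner_on_def by simp

lemma inner_on_delta:
  assumes "m \<in> J" "finite J"
  shows "inner_on J (\<lambda>j. if j = m then 1 else 0) w = cnj (w m)"
proof -
  have "inner_on J (\<lambda>j. if j = m then 1 else 0) w = (\<Sum>j\<in>J. if j = m then cnj (w m) else 0)"
    unfolding inner_on_def by (intro sum.cong) auto
  then show ?thesis
    using assms by simp
qed

lemma norm2_on_delta:
  assumes "m \<in> J" "finite J"
  shows "norm2_on J (\<lambda>j. if j = m then 1 else 0) = 1"
proof -
  have "norm2_on J (\<lambda>j. if j = m then 1 else 0) = (\<Sum>j\<in>J. if j = m then 1 else 0)"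
    unfolding norm2_on_def by (intro sum.cong) auto
  then show ?thesis
    using assms by simp
qed

lemma norm2_on_orthonormal: "orthonormal_on J W \<Longrightarrow> w \<in> W \<Longrightarrow> norm2_on J w = 1"
  using norm2_on_conv_inner_on[of J w] unfolding orthonormal_on_def by (metis of_real_eq_1_iff)

lemma inner_on_proj_on_left: "inner_on J (proj_on J W y) z = (\<Sum>w\<in>W. inner_on J y w * inner_on J w z)"
proof -
  have "inner_on J (proj_on J W y) z = (\<Sum>m\<in>J. \<Sum>w\<in>W. inner_on J y w * (w m * cnj (z m)))"
    unfolding proj_on_def inner_on_def[of J "\<lambda>m. \<Sum>w\<in>W. _ w * w m"]
    by (simp add: sum_distrib_right mult.assoc)
  also have "\<dots> = (\<Sum>w\<in>W. inner_on J y w * inner_on J w z)"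
    by (subst sum.swap) (simp add: inner_on_def sum_distrib_left)
  finally show ?thesis .
qed

lemma inner_on_proj_on_orthonormal:
  assumes "orthonormal_on J W" "finite W" "w \<in> W"
  shows "inner_on J (proj_on J W y) w = inner_on J y w"
proof -
  have "inner_on J (proj_on J W y) w = (\<Sum>w'\<in>W. inner_on J y w' * (if w' = w then 1 else 0))"
    unfolding inner_on_proj_on_left using assms(1,3) unfolding orthonormal_on_def
    by (intro sum.cong) auto
  also have "\<dots> = inner_on J y w"
    using assms by (simp add: if_distrib cong: if_cong)
  finally show ?thesis .
qed

lemma inner_on_proj_on_right:
  assumes "orthonormal_on J W" "finite W"
  shows "inner_on J y (proj_on J W z) = (\<Sum>w\<in>W. inner_on J y w * cnj (inner_on J z w))"
proof -
  have "inner_on J y (proj_on J W z) = cnj (\<Sum>w\<in>W. inner_on J z w * inner_on J w y)"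
    by (subst inner_on_commute) (simp add: inner_on_proj_on_left)
  then show ?thesis
    by (simp add: inner_on_commute[of J _ y] mult.commute)
qed

lemma norm2_on_proj_on:
  assumes "orthonormal_on J W" "finite W"
  shows "norm2_on J (proj_on J W y) = (\<Sum>w\<in>W. (norm (inner_on J y w))^2)"
proof -
  have "complex_of_real (norm2_on J (proj_on J W y)) = (\<Sum>w\<in>W. inner_on J y w * cnj (inner_on J y w))"
    unfolding norm2_on_conv_inner_on inner_on_proj_on_right[OF assms]
    using inner_on_proj_on_orthonormal[OF assms] by simp
  also have "\<dots> = complex_of_real (\<Sum>w\<in>W. (norm (inner_on J y w))^2)"
    by (simp add: mult_cnj_eq_norm_power2)
  finally show ?thesis
    by (simp only: of_real_eq_iff)
qed

lemma norm2_on_residual: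
  assumes "orthonormal_on J W" "finite W"
  shows "norm2_on J (\<lambda>m. y m - proj_on J W y m) = norm2_on J y - (\<Sum>w\<in>W. (norm (inner_on J y w))^2)"
proof -
  have "inner_on J (proj_on J W y) y = (\<Sum>w\<in>W. inner_on J y w * cnj (inner_on J y w))"
    unfolding inner_on_proj_on_left by (simp add: inner_on_commute[of J _ y])
  then have "complex_of_real (norm2_on J (\<lambda>m. y m - proj_on J W y m))
      = inner_on J y y - (\<Sum>w\<in>W. inner_on J y w * cnj (inner_on J y w))"
    unfolding norm2_on_conv_inner_on inner_on_diff_left inner_on_diff_right
      inner_on_proj_on_right[OF assms]
    using inner_on_proj_on_orthonormal[OF assms] by simp
  also have "\<dots> = complex_of_real (norm2_on J y - (\<Sum>w\<in>W. (norm (inner_on J y w))^2))"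
    by (simp add: mult_cnj_eq_norm_power2 norm2_on_conv_inner_on[symmetric])
  finally show ?thesis
    by (simp only: of_real_eq_iff)
qed

lemma norm2_on_residual_le:
  assumes "orthonormal_on J W" "finite W"
  shows "norm2_on J (\<lambda>m. y m - proj_on J W y m) \<le> norm2_on J y"
  unfolding norm2_on_residual[OF assms] by (simp add: sum_nonneg)

lemma proj_on_insert:
  "finite W \<Longrightarrow> w0 \<notin> W \<Longrightarrow> proj_on J (insert w0 W) y m = inner_on J y w0 * w0 m + proj_on J W y m"
  unfolding proj_on_def by simp

lemma normalized_residual_exists:
  assumes W: "orthonormal_on J W" "finite W"
    and nonzero: "norm2_on J (\<lambda>m. y m - proj_on J W y m) \<noteq> 0"
  obtains w0 where "\<And>w. w \<in> W \<Longrightarrow> inner_on J w w0 = 0" "inner_on J w0 w0 = 1"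
    "\<And>m. inner_on J y w0 * w0 m = y m - proj_on J W y m"
proof -
  define r where "r m = y m - proj_on J W y m" for m
  define s where "s = sqrt (norm2_on J r)"
  define w0 where "w0 m = r m / complex_of_real s" for m
  have "s > 0"
    using nonzero norm2_on_nonneg[of J r] by (simp add: s_def r_def[abs_def])
  have w0_orth: "inner_on J w w0 = 0" if "w \<in> W" for w
  proof -
    have "inner_on J w w0 = cnj (inner_on J r w) / complex_of_real s"
      unfolding w0_def by (simp add: inner_on_def sum_divide_distrib mult.commute)
    also have "inner_on J r w = 0"
      unfolding r_def inner_on_diff_left using inner_on_proj_on_orthonormal[OF W that] by simp
    finally show ?thesis by simp
  qed
  have r_inner_r: "inner_on J r r = (complex_of_real s)^2"
    unfolding s_def by (metis norm2_on_conv_inner_on norm2_on_nonneg of_real_power real_sqrt_pow2)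
  then have w0_unit: "inner_on J w0 w0 = 1"
    using \<open>s > 0\<close> unfolding w0_def inner_on_def
    by (simp add: sum_divide_distrib[symmetric] power2_eq_square)
  have w0_y: "inner_on J y w0 * w0 m = r m" for m
  proof -
    have "inner_on J y w0 = inner_on J (\<lambda>m. r m + proj_on J W y m) w0"
      unfolding r_def by simp
    also have "\<dots> = inner_on J r w0"
      unfolding inner_on_add_left inner_on_proj_on_left using w0_orth by simp
    also have "\<dots> = complex_of_real s"
      using r_inner_r \<open>s > 0\<close> unfolding w0_def inner_on_def
      by (simp add: sum_divide_distrib[symmetric] power2_eq_square)
    finally show ?thesis
      unfolding w0_def using \<open>s > 0\<close> by simp
  qed
  show ?thesis
    using that[of w0] w0_orth w0_unit w0_y by (simp add: r_def)
qed

lemma gram_schmidt_step: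
  assumes J: "finite J" and W: "orthonormal_on J W" "finite W"
  obtains W' where "finite W'" "card W' \<le> Suc (card W)" "orthonormal_on J W'"
    "\<forall>m\<in>J. y m = proj_on J W' y m"
    "\<And>z. \<forall>m\<in>J. z m = proj_on J W z m \<Longrightarrow> \<forall>m\<in>J. z m = proj_on J W' z m"
proof (cases "norm2_on J (\<lambda>m. y m - proj_on J W y m) = 0")
  case True
  then have "\<forall>m\<in>J. y m = proj_on J W y m"
    using norm2_on_eq_0_iff[OF J] by simp
  then show ?thesis
    using W by (intro that[of W]) auto
next
  case False
  then obtain w0 where w0_orth: "\<And>w. w \<in> W \<Longrightarrow> inner_on J w w0 = 0"
    and w0_unit: "inner_on J w0 w0 = 1"
    and w0_y: "\<And>m. inner_on J y w0 * w0 m = y m - proj_on J W y m"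
    using normalized_residual_exists[OF W] by blast
  have "w0 \<notin> W"
    using w0_orth[of w0] w0_unit by auto
  have "inner_on J w0 w = 0" if "w \<in> W" for w
    using w0_orth[OF that] inner_on_commute[of J w0 w] by simp
  then have "orthonormal_on J (insert w0 W)"
    using W(1) w0_orth w0_unit \<open>w0 \<notin> W\<close> unfolding orthonormal_on_def by auto
  moreover have "\<forall>m\<in>J. y m = proj_on J (insert w0 W) y m"
    using W(2) \<open>w0 \<notin> W\<close> by (simp add: proj_on_insert w0_y)
  moreover have "\<forall>m\<in>J. z m = proj_on J (insert w0 W) z m"
    if z: "\<forall>m\<in>J. z m = proj_on J W z m" for z
  proof -
    have "inner_on J z w0 = inner_on J (proj_on J W z) w0"
      using z by (intro inner_on_cong) auto
    also have "\<dots> = 0"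
      unfolding inner_on_proj_on_left using w0_orth by simp
    finally show ?thesis
      using z W(2) \<open>w0 \<notin> W\<close> by (simp add: proj_on_insert)
  qed
  ultimately show ?thesis
    using that[of "insert w0 W"] W(2) \<open>w0 \<notin> W\<close> by simp
qed

lemma gram_schmidt:
  assumes J: "finite J" and P: "finite P"
  obtains W where "finite W" "card W \<le> card P" "orthonormal_on J W"
    "\<And>\<psi> m. \<psi> \<in> P \<Longrightarrow> m \<in> J \<Longrightarrow> \<psi> m = proj_on J W \<psi> m"
proof -
  have "\<exists>W. finite W \<and> card W \<le> card P \<and> orthonormal_on J W \<and>
      (\<forall>\<psi>\<in>P. \<forall>m\<in>J. \<psi> m = proj_on J W \<psi> m)"
    using P
  proof (induction P rule: finite_induct)
    case empty
    show ?case
      by (intro exI[of _ "{}"]) (simp add: orthonormal_on_def)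
  next
    case (insert \<psi> P)
    then obtain W where W: "finite W" "card W \<le> card P" "orthonormal_on J W"
      "\<forall>\<psi>\<in>P. \<forall>m\<in>J. \<psi> m = proj_on J W \<psi> m"
      by blast
    obtain W' where "finite W'" "card W' \<le> Suc (card W)" "orthonormal_on J W'"
      "\<forall>m\<in>J. \<psi> m = proj_on J W' \<psi> m"
      "\<And>z. \<forall>m\<in>J. z m = proj_on J W z m \<Longrightarrow> \<forall>m\<in>J. z m = proj_on J W' z m"
      using gram_schmidt_step[OF J W(3,1)] by blast
    then show ?case
      using W insert(1,2) by (intro exI[of _ W']) auto
  qed
  then show ?thesis
    using that by blast
qed

lemma inner_on_delta_residual:
  assumes "m \<in> J" "finite J"
  shows "inner_on J (\<lambda>j. (if j = m then 1 else 0) - proj_on J W (\<lambda>j. if j = m then 1 else 0) j) y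
    = cnj (y m - proj_on J W y m)"
proof -
  have "inner_on J (proj_on J W (\<lambda>j. if j = m then 1 else 0)) y = (\<Sum>w\<in>W. cnj (w m) * cnj (inner_on J y w))"
    unfolding inner_on_proj_on_left using assms by (simp add: inner_on_delta inner_on_commute[of J _ y])
  then show ?thesis
    using assms by (simp add: inner_on_diff_left inner_on_delta proj_on_def mult.commute)
qed

(* p m is the orthogonal projection of the m-th unit vector onto the span of the \<psi> t,
   and r m the residual. *)
lemma decompose_deltas:
  fixes \<psi> :: "'t \<Rightarrow> 'j \<Rightarrow> complex"
  assumes J: "finite J" and T: "finite T"
  obtains p r :: "'j \<Rightarrow> 'j \<Rightarrow> complex" where
    "\<And>m j. p m j + r m j = (if j = m then 1 else 0)"
    "(\<Sum>m\<in>J. norm2_on J (p m)) \<le> card T"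
    "\<And>m. m \<in> J \<Longrightarrow> norm2_on J (r m) \<le> 1"
    "\<And>m t. m \<in> J \<Longrightarrow> t \<in> T \<Longrightarrow> inner_on J (r m) (\<psi> t) = 0"
    "\<And>y. (\<Sum>m\<in>J. (norm (inner_on J (r m) y))^2) \<le> norm2_on J y"
proof -
  obtain W where W: "finite W" "card W \<le> card (\<psi> ` T)" "orthonormal_on J W"
    and span: "\<And>\<phi> m. \<phi> \<in> \<psi> ` T \<Longrightarrow> m \<in> J \<Longrightarrow> \<phi> m = proj_on J W \<phi> m"
    using gram_schmidt[OF J finite_imageI[OF T]] by metis
  define \<delta> where "\<delta> m = (\<lambda>j. if j = m then 1 else (0::complex))" for m :: 'j
  define p where "p m = proj_on J W (\<delta> m)" for m
  define r where "r m = (\<lambda>j. \<delta> m j - p m j)" for m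
  have r_inner: "inner_on J (r m) y = cnj (y m - proj_on J W y m)" if "m \<in> J" for m y
    unfolding r_def p_def \<delta>_def using that J by (rule inner_on_delta_residual)
  show ?thesis
  proof (rule that[of p r])
    show "p m j + r m j = (if j = m then 1 else 0)" for m j
      by (simp add: r_def \<delta>_def)
    have "(\<Sum>m\<in>J. norm2_on J (p m)) = (\<Sum>m\<in>J. \<Sum>w\<in>W. (norm (w m))^2)"
      unfolding p_def \<delta>_def using J
      by (intro sum.cong) (simp_all add: norm2_on_proj_on[OF W(3,1)] inner_on_delta)
    also have "\<dots> = (\<Sum>w\<in>W. norm2_on J w)"
      unfolding norm2_on_def by (rule sum.swap)
    also have "\<dots> = card W"
      using norm2_on_orthonormal[OF W(3)] by simp
    also have "\<dots> \<le> card T"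
      using W(2) card_image_le[OF T, of \<psi>] by simp
    finally show "(\<Sum>m\<in>J. norm2_on J (p m)) \<le> card T" .
    show "norm2_on J (r m) \<le> 1" if "m \<in> J" for m
      using norm2_on_residual_le[OF W(3,1), of "\<delta> m"] norm2_on_delta[OF that J]
      by (simp add: r_def p_def \<delta>_def)
    show "inner_on J (r m) (\<psi> t) = 0" if "m \<in> J" "t \<in> T" for m t
      using span[of "\<psi> t" m] that by (simp add: r_inner)
    show "(\<Sum>m\<in>J. (norm (inner_on J (r m) y))^2) \<le> norm2_on J y" for y
    proof -
      have "(\<Sum>m\<in>J. (norm (inner_on J (r m) y))^2) = norm2_on J (\<lambda>m. y m - proj_on J W y m)"
        unfolding norm2_on_def by (intro sum.cong) (simp_all add: r_inner del: complex_cnj_diff)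
      then show ?thesis
        using norm2_on_residual_le[OF W(3,1), of y] by simp
    qed
  qed
qed

section \<open>Landau's necessary density condition\<close>

lemma infsum_sum:
  fixes f :: "'i \<Rightarrow> 'a \<Rightarrow> 'b::{topological_comm_monoid_add,t2_space}"
  assumes "finite I" "\<And>i. i \<in> I \<Longrightarrow> f i summable_on A"
  shows "(\<Sum>\<^sub>\<infinity>x\<in>A. \<Sum>i\<in>I. f i x) = (\<Sum>i\<in>I. \<Sum>\<^sub>\<infinity>x\<in>A. f i x)"
    and "(\<lambda>x. \<Sum>i\<in>I. f i x) summable_on A"
  using assms
proof (induction I rule: finite_induct)
  case (insert i I)
  { case 1 then show ?case using insert by (simp add: infsum_add) }
  { case 2 then show ?case using insert by (simp add: summable_on_add) }
qed simp_all

lemma norm_add_power2_le: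
  fixes a b :: "'a::real_normed_vector"
  assumes "e > 0"
  shows "(norm (a + b))^2 \<le> (1 + e) * (norm a)^2 + (1 + 1/e) * (norm b)^2"
proof -
  have "0 \<le> (e * norm a - norm b)^2 / e"
    using assms by simp
  then have "2 * norm a * norm b \<le> e * (norm a)^2 + (norm b)^2 / e"
    using assms by (simp add: power2_eq_square field_simps)
  then have "(norm a + norm b)^2 \<le> (1 + e) * (norm a)^2 + (1 + 1/e) * (norm b)^2"
    using assms by (simp add: power2_eq_square field_simps)
  then show ?thesis
    by (meson norm_ge_zero norm_triangle_ineq order_trans power_mono)
qed

definition localized_poly :: "real set \<Rightarrow> int set \<Rightarrow> (int \<Rightarrow> complex) \<Rightarrow> real \<Rightarrow> complex" where
  "localized_poly E J u x = indicator E x * trig_poly J u x"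

definition localized_energy :: "real set \<Rightarrow> int set \<Rightarrow> (int \<Rightarrow> complex) \<Rightarrow> real" where
  "localized_energy E J u = (\<integral>x. (norm (localized_poly E J u x))^2 \<partial>lborel_torus)"

lemma localized_energy_nonneg: "0 \<le> localized_energy E J u"
  unfolding localized_energy_def by (rule integral_nonneg_AE) auto

lemma bounded_measurable_localized_poly:
  "E \<in> sets borel \<Longrightarrow> bounded_measurable (localized_poly E J u)"
  unfolding localized_poly_def by (intro bounded_measurable_intros bounded_measurable_trig_poly)

lemma fourier_coeff_localized_poly:
  assumes "E \<in> sets borel"
  shows "fourier_coeff (localized_poly E J u) n
    = inner_on J u (\<lambda>m. cnj (fourier_coeff (indicator E) (n - m)))"
proof -
  have "fourier_coeff (localized_poly E J u) n
      = fourier_coeff (\<lambda>x. \<Sum>m\<in>J. u m * (indicator E x * fourier_exp (-m) x)) n"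
    unfolding localized_poly_def trig_poly_def by (simp add: sum_distrib_left algebra_simps)
  also have "\<dots> = (\<Sum>m\<in>J. u m * fourier_coeff (indicator E) (n - m))"
    using assms by (simp add: fourier_coeff_sum fourier_coeff_cmult fourier_coeff_mult_fourier_exp
        bounded_measurable_intros)
  finally show ?thesis
    by (simp add: inner_on_def)
qed

lemma localized_energy_le_norm2_on:
  assumes "E \<in> sets borel" "finite J"
  shows "localized_energy E J u \<le> norm2_on J u"
proof -
  have "localized_energy E J u \<le> (\<integral>x. (norm (trig_poly J u x))^2 \<partial>lborel_torus)"
    unfolding localized_energy_def localized_poly_def
    by (intro integral_mono bounded_measurable_integrable bounded_measurable_intros
        bounded_measurable_trig_poly assms) (simp add: indicator_def)
  then show ?thesis
    using assms by (simp add: parseval_trig_poly norm2_on_def)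
qed

lemma localized_energy_power2_le:
  assumes "E \<in> sets borel" "finite J"
  shows "(localized_energy E J u)^2
    \<le> norm2_on J u * (\<Sum>n\<in>J. (norm (fourier_coeff (localized_poly E J u) n))^2)"
proof -
  let ?c = "fourier_coeff (localized_poly E J u)"
  have "complex_of_real (localized_energy E J u)
      = (\<integral>x. localized_poly E J u x * cnj (trig_poly J u x) \<partial>lborel_torus)"
    unfolding localized_energy_def integral_complex_of_real[symmetric]
    by (intro Bochner_Integration.integral_cong)
       (simp_all add: localized_poly_def mult_cnj_eq_norm_power2 indicator_def)
  also have "\<dots> = (\<Sum>n\<in>J. cnj (u n) * ?c n)"
    using assms by (intro integral_mult_cnj_trig_poly bounded_measurable_localized_poly)
  finally have "localized_energy E J u = norm (\<Sum>n\<in>J. cnj (u n) * ?c n)"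
    by (metis norm_of_real localized_energy_nonneg abs_of_nonneg)
  also have "\<dots> \<le> (\<Sum>n\<in>J. norm (u n) * norm (?c n))"
    by (rule order_trans[OF norm_sum]) (simp add: norm_mult)
  finally have "localized_energy E J u \<le> (\<Sum>n\<in>J. norm (u n) * norm (?c n))" .
  then have "(localized_energy E J u)^2 \<le> (\<Sum>n\<in>J. norm (u n) * norm (?c n))^2"
    using localized_energy_nonneg by (intro power_mono) auto
  also have "\<dots> \<le> norm2_on J u * (\<Sum>n\<in>J. (norm (?c n))^2)"
    unfolding norm2_on_def by (rule Cauchy_Schwarz_ineq_sum)
  finally show ?thesis .
qed

lemma localized_energy_delta:
  assumes "E \<in> sets borel" "E \<subseteq> torus" "m \<in> J" "finite J"
  shows "localized_energy E J (\<lambda>j. if j = m then 1 else 0) = measure lborel E"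
proof -
  have "trig_poly J (\<lambda>j. if j = m then 1 else 0) x = fourier_exp (-m) x" for x
  proof -
    have "trig_poly J (\<lambda>j. if j = m then 1 else 0) x = (\<Sum>j\<in>J. if j = m then fourier_exp (-m) x else 0)"
      unfolding trig_poly_def by (intro sum.cong) auto
    then show ?thesis
      using assms(3,4) by simp
  qed
  then have "localized_energy E J (\<lambda>j. if j = m then 1 else 0) = (\<integral>x. indicator E x \<partial>lborel_torus)"
    unfolding localized_energy_def localized_poly_def
    by (intro Bochner_Integration.integral_cong) (auto simp: indicator_def)
  also have "\<dots> = measure lborel E"
    using assms(1,2) by (rule integral_indicator_torus)
  finally show ?thesis .
qed

lemma localized_energy_add_le:
  assumes "E \<in> sets borel" "e > 0"
  shows "localized_energy E J (\<lambda>j. a j + b j)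
    \<le> (1 + e) * localized_energy E J a + (1 + 1/e) * localized_energy E J b"
proof -
  have "localized_energy E J (\<lambda>j. a j + b j)
      \<le> (\<integral>x. (1 + e) * (norm (localized_poly E J a x))^2
              + (1 + 1/e) * (norm (localized_poly E J b x))^2 \<partial>lborel_torus)"
    unfolding localized_energy_def localized_poly_def trig_poly_add distrib_left
    using assms by (intro integral_mono norm_add_power2_le bounded_measurable_integrable
        bounded_measurable_intros bounded_measurable_trig_poly Bochner_Integration.integrable_add
        integrable_mult_right)
  also have "\<dots> = (1 + e) * localized_energy E J a + (1 + 1/e) * localized_energy E J b"
    unfolding localized_energy_def localized_poly_def using assms
    by (simp add: bounded_measurable_integrable bounded_measurable_intros bounded_measurable_trig_poly)
  finally show ?thesis .
qed

definition sampling_set :: "real set \<Rightarrow> int set \<Rightarrow> real \<Rightarrow> bool" where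
  "sampling_set E Sv A \<longleftrightarrow> (\<forall>g. bounded_measurable g \<and> (\<forall>x. x \<notin> E \<longrightarrow> g x = 0) \<longrightarrow>
      A * (\<Sum>\<^sub>\<infinity>n\<in>UNIV. (norm (fourier_coeff g n))^2) \<le> (\<Sum>\<^sub>\<infinity>n\<in>Sv. (norm (fourier_coeff g n))^2))"

lemma localized_energy_power2_le_tail:
  fixes E :: "real set" and J :: "int set" and u :: "int \<Rightarrow> complex"
  defines "c \<equiv> fourier_coeff (localized_poly E J u)"
  assumes S: "sampling_set E Sv A" and A: "A > 0" and E: "E \<in> sets borel" and J: "finite J"
    and u: "norm2_on J u \<le> 1" and T: "\<And>n. n \<in> T \<Longrightarrow> c n = 0"
  shows "A * (localized_energy E J u)^2 \<le> (\<Sum>\<^sub>\<infinity>n\<in>Sv - T. (norm (c n))^2)"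
proof -
  have summable: "(\<lambda>n. (norm (c n))^2) summable_on UNIV"
    unfolding c_def using E by (intro summable_on_fourier_coeff bounded_measurable_localized_poly)
  have "(localized_energy E J u)^2 \<le> norm2_on J u * (\<Sum>n\<in>J. (norm (c n))^2)"
    unfolding c_def using E J by (rule localized_energy_power2_le)
  also have "\<dots> \<le> (\<Sum>n\<in>J. (norm (c n))^2)"
    using u by (intro mult_left_le_one_le sum_nonneg norm2_on_nonneg) auto
  also have "\<dots> \<le> (\<Sum>\<^sub>\<infinity>n\<in>UNIV. (norm (c n))^2)"
    using J summable by (intro finite_sum_le_infsum) auto
  finally have "A * (localized_energy E J u)^2 \<le> A * (\<Sum>\<^sub>\<infinity>n\<in>UNIV. (norm (c n))^2)"
    using A by simp
  also have "\<dots> \<le> (\<Sum>\<^sub>\<infinity>n\<in>Sv. (norm (c n))^2)"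
    using S bounded_measurable_localized_poly[OF E] unfolding sampling_set_def c_def
    by (auto simp: localized_poly_def)
  also have "\<dots> = (\<Sum>\<^sub>\<infinity>n\<in>Sv - T. (norm (c n))^2)"
    using T by (intro infsum_cong_neutral) auto
  finally show ?thesis .
qed

lemma sum_infsum_localized_coeffs_le:
  fixes r :: "int \<Rightarrow> int \<Rightarrow> complex" and \<tau> :: real
  assumes E: "E \<in> sets borel" and J: "finite J"
    and r: "\<And>y. (\<Sum>m\<in>J. (norm (inner_on J (r m) y))^2) \<le> norm2_on J y"
    and tail: "\<And>m. m \<in> J \<Longrightarrow> (\<Sum>\<^sub>\<infinity>n\<in>B. (norm (fourier_coeff (indicator E) (n - m)))^2) \<le> \<tau>"
  shows "(\<Sum>m\<in>J. \<Sum>\<^sub>\<infinity>n\<in>B. (norm (fourier_coeff (localized_poly E J (r m)) n))^2)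
    \<le> card J * \<tau>"
proof -
  let ?h = "fourier_coeff (indicator E)"
  have h_shift: "?h (n - m) = fourier_coeff (\<lambda>x. indicator E x * fourier_exp (-m) x) n" for n m
    by (simp add: fourier_coeff_mult_fourier_exp)
  have summable_h: "(\<lambda>n. (norm (?h (n - m)))^2) summable_on B" for m
    unfolding h_shift using E by (intro summable_on_fourier_coeff bounded_measurable_intros)
  have summable_r: "(\<lambda>n. (norm (fourier_coeff (localized_poly E J (r m)) n))^2)
      summable_on B" for m
    using E by (intro summable_on_fourier_coeff bounded_measurable_localized_poly)
  have "(\<Sum>m\<in>J. \<Sum>\<^sub>\<infinity>n\<in>B. (norm (fourier_coeff (localized_poly E J (r m)) n))^2)
      = (\<Sum>\<^sub>\<infinity>n\<in>B. \<Sum>m\<in>J. (norm (inner_on J (r m) (\<lambda>k. cnj (?h (n - k)))))^2)"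
    using J summable_r by (simp add: infsum_sum(1) fourier_coeff_localized_poly[OF E])
  also have "\<dots> \<le> (\<Sum>\<^sub>\<infinity>n\<in>B. \<Sum>m\<in>J. (norm (?h (n - m)))^2)"
    using r[of "\<lambda>k. cnj (?h (_ - k))"] J summable_r summable_h
    by (intro infsum_mono infsum_sum(2)) (auto simp: norm2_on_def fourier_coeff_localized_poly[OF E])
  also have "\<dots> = (\<Sum>m\<in>J. \<Sum>\<^sub>\<infinity>n\<in>B. (norm (?h (n - m)))^2)"
    using J summable_h by (simp add: infsum_sum(1))
  also have "\<dots> \<le> card J * \<tau>"
    using sum_mono[of J _ "\<lambda>_. \<tau>", OF tail] by simp
  finally show ?thesis .
qed

lemma le_half_power2_div_add:
  fixes x \<eta> :: real
  assumes "\<eta> > 0"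
  shows "x \<le> (x^2 / \<eta> + \<eta>) / 2"
proof -
  have "2 * x * \<eta> \<le> x^2 + \<eta>^2"
    by (rule sum_squares_bound)
  then show ?thesis
    using assms by (simp add: field_simps power2_eq_square)
qed

(* Landau's counting argument: split each unit vector as in decompose_deltas, with \<psi> n
   the coefficient vector of the n-th Fourier coefficient of a polynomial localized to E.
   The projections carry total energy at most |T|; the residuals have no Fourier
   coefficients in T, so the sampling inequality bounds their energy on E by the tail
   \<tau> of the Fourier coefficients of the indicator of E. *)
lemma landau_counting:
  fixes \<epsilon> \<eta> \<tau> :: real
  assumes S: "sampling_set E Sv A" and A: "A > 0" and E: "E \<in> sets borel" "E \<subseteq> torus"
    and J: "finite J" and T: "finite T" and \<epsilon>: "\<epsilon> > 0" and \<eta>: "\<eta> > 0"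
    and tail: "\<And>m. m \<in> J \<Longrightarrow> (\<Sum>\<^sub>\<infinity>n\<in>Sv - T. (norm (fourier_coeff (indicator E) (n - m)))^2) \<le> \<tau>"
  shows "card J * measure lborel E \<le> (1 + \<epsilon>) * card T + (1 + 1/\<epsilon>) * (card J * (\<tau> / (A * \<eta>) + \<eta>) / 2)"
proof -
  define \<psi> where "\<psi> n = (\<lambda>m. cnj (fourier_coeff (indicator E) (n - m)))" for n
  obtain p r :: "int \<Rightarrow> int \<Rightarrow> complex" where
    pr: "\<And>m j. p m j + r m j = (if j = m then 1 else 0)"
    and p: "(\<Sum>m\<in>J. norm2_on J (p m)) \<le> card T"
    and r_norm: "\<And>m. m \<in> J \<Longrightarrow> norm2_on J (r m) \<le> 1"
    and r_orth: "\<And>m n. m \<in> J \<Longrightarrow> n \<in> T \<Longrightarrow> inner_on J (r m) (\<psi> n) = 0"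
    and r_bessel: "\<And>y. (\<Sum>m\<in>J. (norm (inner_on J (r m) y))^2) \<le> norm2_on J y"
    using decompose_deltas[OF J T, of \<psi>] by blast
  define a where "a m = (\<Sum>\<^sub>\<infinity>n\<in>Sv - T. (norm (fourier_coeff (localized_poly E J (r m)) n))^2)" for m
  have split: "measure lborel E \<le> (1 + \<epsilon>) * localized_energy E J (p m) + (1 + 1/\<epsilon>) * localized_energy E J (r m)"
    if "m \<in> J" for m
  proof -
    have "measure lborel E = localized_energy E J (\<lambda>j. p m j + r m j)"
      unfolding pr using localized_energy_delta[OF E that J] by simp
    then show ?thesis
      using localized_energy_add_le[OF E(1) \<epsilon>] by simp
  qed
  have r_small: "localized_energy E J (r m) \<le> (a m / (A * \<eta>) + \<eta>) / 2" if "m \<in> J" for m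
  proof -
    have "A * (localized_energy E J (r m))^2 \<le> a m"
      unfolding a_def using S A E(1) J r_norm[OF that]
      by (rule localized_energy_power2_le_tail)
         (simp add: fourier_coeff_localized_poly[OF E(1)] r_orth[OF that, unfolded \<psi>_def])
    then have "(localized_energy E J (r m))^2 / \<eta> \<le> a m / (A * \<eta>)"
      using A \<eta> by (simp add: field_simps)
    then show ?thesis
      using le_half_power2_div_add[OF \<eta>, of "localized_energy E J (r m)"] by simp
  qed
  have "(\<Sum>m\<in>J. a m) \<le> card J * \<tau>"
    unfolding a_def using E(1) J r_bessel tail by (rule sum_infsum_localized_coeffs_le)
  then have "(\<Sum>m\<in>J. (a m / (A * \<eta>) + \<eta>) / 2) \<le> (card J * \<tau> / (A * \<eta>) + card J * \<eta>) / 2"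
    using A \<eta> by (simp add: sum.distrib sum_divide_distrib[symmetric] divide_right_mono)
  also have "\<dots> = card J * (\<tau> / (A * \<eta>) + \<eta>) / 2"
    by (simp add: field_simps)
  finally have r_energy: "(\<Sum>m\<in>J. localized_energy E J (r m)) \<le> card J * (\<tau> / (A * \<eta>) + \<eta>) / 2"
    using sum_mono[of J "\<lambda>m. localized_energy E J (r m)", OF r_small] by linarith
  have "(\<Sum>m\<in>J. localized_energy E J (p m)) \<le> (\<Sum>m\<in>J. norm2_on J (p m))"
    by (intro sum_mono localized_energy_le_norm2_on E(1) J)
  with p have p_energy: "(\<Sum>m\<in>J. localized_energy E J (p m)) \<le> card T"
    by linarith
  have "card J * measure lborel E
      \<le> (\<Sum>m\<in>J. (1 + \<epsilon>) * localized_energy E J (p m) + (1 + 1/\<epsilon>) * localized_energy E J (r m))"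
    using sum_mono[of J "\<lambda>_. measure lborel E", OF split] by simp
  also have "\<dots> = (1 + \<epsilon>) * (\<Sum>m\<in>J. localized_energy E J (p m))
      + (1 + 1/\<epsilon>) * (\<Sum>m\<in>J. localized_energy E J (r m))"
    by (simp add: sum.distrib sum_distrib_left)
  also have "\<dots> \<le> (1 + \<epsilon>) * card T + (1 + 1/\<epsilon>) * (card J * (\<tau> / (A * \<eta>) + \<eta>) / 2)"
    using p_energy r_energy \<epsilon> by (intro add_mono mult_left_mono) auto
  finally show ?thesis .
qed

lemma small_tail_exists:
  fixes f :: "int \<Rightarrow> real"
  assumes nonneg: "\<And>k. f k \<ge> 0" and summable: "f summable_on UNIV" and "\<delta> > 0"
  obtains M :: nat where "(\<Sum>\<^sub>\<infinity>k\<in>{k. int M < \<bar>k\<bar>}. f k) \<le> \<delta>"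
proof -
  have "eventually (\<lambda>F. dist (sum f F) (infsum f UNIV) < \<delta>) (finite_subsets_at_top UNIV)"
    using infsum_tendsto[OF summable] \<open>\<delta> > 0\<close> by (rule tendstoD)
  then obtain X where "finite X"
    and X: "\<And>Y. finite Y \<Longrightarrow> X \<subseteq> Y \<Longrightarrow> dist (sum f Y) (infsum f UNIV) < \<delta>"
    unfolding eventually_finite_subsets_at_top by auto
  define M where "M = nat (Max (insert 0 (abs ` X)))"
  define Y where "Y = {- int M..int M}"
  have "X \<subseteq> Y"
  proof
    fix x assume "x \<in> X"
    then have "\<bar>x\<bar> \<le> Max (insert 0 (abs ` X))"
      using \<open>finite X\<close> by (intro Max_ge) auto
    then show "x \<in> Y"
      unfolding Y_def M_def by auto
  qed
  then have close: "infsum f UNIV - sum f Y < \<delta>"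
    using X[of Y] by (simp add: Y_def dist_real_def)
  have "(\<Sum>\<^sub>\<infinity>k\<in>{k. int M < \<bar>k\<bar>}. f k) \<le> infsum f UNIV - sum f Y"
  proof (rule infsum_le_finite_sums)
    show "f summable_on {k. int M < \<bar>k\<bar>}"
      by (rule summable_on_subset_banach[OF summable]) simp
    fix F assume F: "finite F" "F \<subseteq> {k. int M < \<bar>k\<bar>}"
    then have "F \<inter> Y = {}"
      unfolding Y_def by fastforce
    then have "sum f F + sum f Y = sum f (F \<union> Y)"
      using F(1) by (simp add: sum.union_disjoint Y_def)
    also have "\<dots> \<le> infsum f UNIV"
      using F(1) nonneg by (intro finite_sum_le_infsum[OF summable]) (auto simp: Y_def)
    finally show "sum f F \<le> infsum f UNIV - sum f Y"
      by simp
  qed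
  with close show ?thesis
    using that[of M] by simp
qed

lemma infsum_shift_le_tail:
  fixes f :: "int \<Rightarrow> real"
  assumes nonneg: "\<And>k. f k \<ge> 0" and summable: "f summable_on UNIV"
    and m: "\<bar>m\<bar> \<le> int N" and B: "B \<inter> {-(int N + int M)..int N + int M} = {}"
  shows "(\<Sum>\<^sub>\<infinity>n\<in>B. f (n - m)) \<le> (\<Sum>\<^sub>\<infinity>k\<in>{k. int M < \<bar>k\<bar>}. f k)"
proof -
  have "(\<Sum>\<^sub>\<infinity>n\<in>B. f (n - m)) = infsum f ((\<lambda>n. n - m) ` B)"
    by (subst infsum_reindex) (auto simp: inj_on_def o_def)
  also have "\<dots> \<le> (\<Sum>\<^sub>\<infinity>k\<in>{k. int M < \<bar>k\<bar>}. f k)"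
  proof (rule infsum_mono_neutral)
    show "f summable_on (\<lambda>n. n - m) ` B" "f summable_on {k. int M < \<bar>k\<bar>}"
      by (rule summable_on_subset_banach[OF summable], simp)+
    show "f x \<le> 0" if "x \<in> (\<lambda>n. n - m) ` B - {k. int M < \<bar>k\<bar>}" for x
      using that m B by force
  qed (use nonneg in auto)
  finally show ?thesis .
qed

lemma landau_window:
  fixes \<delta> :: real
  assumes S: "sampling_set E Sv A" and A: "A > 0" and E: "E \<in> sets borel" "E \<subseteq> torus"
    and \<delta>: "0 < \<delta>" "\<delta> \<le> 1"
    and tail: "(\<Sum>\<^sub>\<infinity>k\<in>{k. int M < \<bar>k\<bar>}. (norm (fourier_coeff (indicator E) k))^2) \<le> A * \<delta>^4"
  shows "(2 * N + 1) * (measure lborel E - 2 * \<delta>)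
    \<le> (1 + \<delta>) * card (Sv \<inter> {-(int N + int M)..int N + int M})"
proof -
  let ?f = "\<lambda>k. (norm (fourier_coeff (indicator E) k))^2"
  define t where "t = (\<Sum>\<^sub>\<infinity>k\<in>{k. int M < \<bar>k\<bar>}. ?f k)"
  define J where "J = {- int N..int N}"
  define T where "T = Sv \<inter> {-(int N + int M)..int N + int M}"
  have card_J: "card J = 2 * N + 1"
    unfolding J_def by simp
  have "t / (A * \<delta>^2) \<le> \<delta>^2"
    using tail A \<delta> by (simp add: t_def field_simps power2_eq_square power4_eq_xxxx)
  then have "card J * (t / (A * \<delta>^2) + \<delta>^2) \<le> card J * (2 * \<delta>^2)"
    by (intro mult_left_mono) auto
  then have "card J * (t / (A * \<delta>^2) + \<delta>^2) / 2 \<le> card J * \<delta>^2"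
    by simp
  have "card J * measure lborel E
      \<le> (1 + \<delta>) * card T + (1 + 1/\<delta>) * (card J * (t / (A * \<delta>^2) + \<delta>^2) / 2)"
  proof (rule landau_counting[OF S A E])
    fix m assume "m \<in> J"
    then show "(\<Sum>\<^sub>\<infinity>n\<in>Sv - T. ?f (n - m)) \<le> t"
      unfolding t_def J_def T_def using E(1)
      by (intro infsum_shift_le_tail summable_on_fourier_coeff bounded_measurable_intros) auto
  qed (use \<delta> in \<open>auto simp: J_def T_def\<close>)
  also have "(1 + 1/\<delta>) * (card J * (t / (A * \<delta>^2) + \<delta>^2) / 2) \<le> (1 + 1/\<delta>) * (card J * \<delta>^2)"
    using \<open>card J * (t / (A * \<delta>^2) + \<delta>^2) / 2 \<le> card J * \<delta>^2\<close> \<delta>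
    by (intro mult_left_mono) auto
  also have "\<dots> \<le> card J * (2 * \<delta>)"
    using \<delta> by (simp add: field_simps power2_eq_square mult_left_le_one_le)
  finally show ?thesis
    unfolding card_J T_def by (simp add: algebra_simps)
qed

lemma mult_one_minus_le_if_le_one_plus:
  fixes a d c \<delta> :: real
  assumes "(a + 1) * d \<le> (1 + \<delta>) * c" "0 \<le> a" "0 \<le> d" "0 < \<delta>"
  shows "a * d * (1 - \<delta>) \<le> c"
proof -
  have "0 \<le> a * d * \<delta>^2"
    using assms by simp
  then have "(1 + \<delta>) * (a * d * (1 - \<delta>)) \<le> (a + 1) * d"
    using assms by (simp add: algebra_simps power2_eq_square)
  also have "\<dots> \<le> (1 + \<delta>) * c"
    by (fact assms(1))
  finally show ?thesis
    using assms by (simp add: mult_le_cancel_left_pos)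
qed

lemma diff_le_power2_one_minus_mult:
  fixes \<mu> \<delta> :: real
  assumes "\<mu> \<le> 1" "0 < \<delta>" "0 \<le> \<mu> - 2 * \<delta>"
  shows "\<mu> - 4 * \<delta> \<le> (1 - \<delta>)^2 * (\<mu> - 2 * \<delta>)"
proof -
  have "\<delta> * \<mu> \<le> \<delta>"
    using assms by (simp add: mult_left_le_one_le)
  moreover have "(1 - 2 * \<delta>) * (\<mu> - 2 * \<delta>) = \<mu> - 2 * \<delta> - 2 * (\<delta> * \<mu>) + 4 * (\<delta> * \<delta>)"
    by (simp add: algebra_simps)
  moreover have "0 \<le> \<delta> * \<delta>"
    by simp
  ultimately have "\<mu> - 4 * \<delta> \<le> (1 - 2 * \<delta>) * (\<mu> - 2 * \<delta>)"
    by linarith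
  also have "\<dots> \<le> (1 - \<delta>)^2 * (\<mu> - 2 * \<delta>)"
    using assms by (intro mult_right_mono) (auto simp: power2_eq_square algebra_simps)
  finally show ?thesis .
qed

lemma density_window_arith:
  fixes \<mu> \<delta> y c n N M :: real
  assumes window: "(2 * N + 1) * (\<mu> - 2 * \<delta>) \<le> (1 + \<delta>) * c"
    and n: "n = N + M" "M < \<delta> * n" "0 \<le> M"
    and \<delta>: "0 < \<delta>" "\<delta> \<le> 1" and \<mu>: "\<mu> \<le> 1" and y: "y + 8 * \<delta> \<le> \<mu>" and c: "0 \<le> c"
  shows "y * (2 * n) < c"
proof -
  have "0 < \<delta> * n"
    using n by linarith
  then have "0 < n"
    using \<delta> by (simp add: zero_less_mult_iff)
  show ?thesis
  proof (cases "\<mu> - 2 * \<delta> \<le> 0")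
    case True
    then have "y < 0"
      using y \<delta> by linarith
    then show ?thesis
      using \<open>0 < n\<close> c by (smt (verit) mult_neg_pos)
  next
    case False
    have N: "n * (1 - \<delta>) \<le> N" "0 \<le> n * (1 - \<delta>)"
      using n \<delta> \<open>0 < n\<close> by (simp add: algebra_simps, simp)
    have "2 * n * (\<mu> - 4 * \<delta>) \<le> 2 * n * ((1 - \<delta>)^2 * (\<mu> - 2 * \<delta>))"
      using diff_le_power2_one_minus_mult[OF \<mu> \<delta>(1)] False \<open>0 < n\<close> by (intro mult_left_mono) auto
    also have "\<dots> = 2 * (n * (1 - \<delta>)) * (\<mu> - 2 * \<delta>) * (1 - \<delta>)"
      by (simp only: power2_eq_square ac_simps)
    also have "\<dots> \<le> 2 * N * (\<mu> - 2 * \<delta>) * (1 - \<delta>)"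
      using N False \<delta> by (intro mult_right_mono) auto
    also have "\<dots> \<le> c"
      using window N False \<delta> by (intro mult_one_minus_le_if_le_one_plus) auto
    finally have "(\<mu> - 4 * \<delta>) * (2 * n) \<le> c"
      by (simp only: ac_simps)
    moreover have "y * (2 * n) < (\<mu> - 4 * \<delta>) * (2 * n)"
      using y \<delta> \<open>0 < n\<close> by (intro mult_strict_right_mono) auto
    ultimately show ?thesis
      by linarith
  qed
qed

lemma landau_density_eventually:
  assumes S: "sampling_set E Sv A" and A: "A > 0" and E: "E \<in> sets borel" "E \<subseteq> torus"
    and y: "y < measure lborel E"
  shows "eventually (\<lambda>n::nat. y < card (Sv \<inter> {- int n..int n}) / (2 * real n)) sequentially"
proof -
  define \<mu> where "\<mu> = measure lborel E"
  define \<delta> where "\<delta> = min 1 ((\<mu> - y) / 8)"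
  have \<delta>: "0 < \<delta>" "\<delta> \<le> 1" and y_\<delta>: "y + 8 * \<delta> \<le> \<mu>"
    using y unfolding \<delta>_def \<mu>_def by (auto simp: min_def field_simps)
  have "A * \<delta>^4 > 0"
    using A \<delta> by simp
  then obtain M :: nat
    where tail: "(\<Sum>\<^sub>\<infinity>k\<in>{k. int M < \<bar>k\<bar>}. (norm (fourier_coeff (indicator E) k))^2) \<le> A * \<delta>^4"
    using small_tail_exists[OF _ summable_on_fourier_coeff[OF bounded_measurable_indicator[OF E(1)]]]
    by auto
  show ?thesis
  proof (rule eventually_sequentiallyI)
    fix n :: nat assume n: "M + nat \<lceil>M / \<delta>\<rceil> + 1 \<le> n"
    define N where "N = n - M"
    have "n = N + M"
      using n by (simp add: N_def)
    have "real M / \<delta> \<le> real (nat \<lceil>real M / \<delta>\<rceil>)"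
      by linarith
    then have "real M / \<delta> < real n"
      using n by linarith
    then have "M < \<delta> * n"
      using \<delta> by (simp add: pos_divide_less_eq mult.commute)
    have "(2 * real N + 1) * (\<mu> - 2 * \<delta>) \<le> (1 + \<delta>) * card (Sv \<inter> {- int n..int n})"
      using landau_window[OF S A E \<delta> tail, of N] \<open>n = N + M\<close> by (simp add: \<mu>_def)
    then have "y * (2 * real n) < card (Sv \<inter> {- int n..int n})"
      using \<open>n = N + M\<close> \<open>M < \<delta> * n\<close> \<delta> y_\<delta> measure_le_1_if_subset_torus[OF E]
      by (intro density_window_arith[where N = N and M = M]) (auto simp: \<mu>_def)
    moreover have "0 < real n"
      using n by simp
    ultimately show "y < card (Sv \<inter> {- int n..int n}) / (2 * real n)"
      by (simp add: pos_less_divide_eq)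
  qed
qed

lemma landau_density_bound:
  assumes "sampling_set E Sv A" "A > 0" "E \<in> sets borel" "E \<subseteq> torus"
  shows "ereal (measure lborel E) \<le> R_D Sv"
  unfolding R_D_def le_Liminf_iff
proof (intro allI impI)
  fix y :: ereal assume y: "y < ereal (measure lborel E)"
  show "eventually (\<lambda>n. y < ereal (card (Sv \<inter> {- int n..int n}) / (2 * real n))) sequentially"
  proof (cases y)
    case (real r)
    then show ?thesis
      using landau_density_eventually[OF assms, of r] y by simp
  qed (use y in auto)
qed

section \<open>Rank deficiency of submatrices\<close>

definition masked_column :: "real^'n^'n \<Rightarrow> 'n set \<Rightarrow> 'n \<Rightarrow> real^'n" where
  "masked_column U A i = (\<chi> w. if w \<in> A then U$w$i else 0)"

lemma sub_rank_eq_dim: "sub_rank U A C = dim (masked_column U A ` C)"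
  unfolding sub_rank_def masked_column_def ..

lemma masked_column_remove_row:
  "v \<in> A \<Longrightarrow> masked_column U A i = masked_column U (A - {v}) i + U$v$i *\<^sub>R axis v 1"
  unfolding masked_column_def by (vector axis_def)

lemma masked_columns_subset_span_remove_row:
  assumes "v \<in> A"
  shows "masked_column U A ` P \<subseteq> span (insert (axis v 1) (masked_column U (A - {v}) ` P))"
proof
  fix x assume "x \<in> masked_column U A ` P"
  then obtain i where "i \<in> P" and x: "x = masked_column U A i"
    by auto
  then show "x \<in> span (insert (axis v 1) (masked_column U (A - {v}) ` P))"
    unfolding x masked_column_remove_row[OF assms]
    by (intro span_add span_scale span_base) auto
qed

lemma full_column_rank_subset:
  fixes U :: "real^'n^'n"
  assumes full: "sub_rank U A I = card I" and P: "P \<subseteq> I"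
  shows "inj_on (masked_column U A) P" "sub_rank U A P = card P"
proof -
  let ?col = "masked_column U A"
  have "dim (?col ` I) \<le> card (?col ` I)" "card (?col ` I) \<le> card I"
    by (simp_all add: dim_le_card' card_image_le)
  with full have card_eq: "card (?col ` I) = card I" and dim_eq: "dim (?col ` I) = card (?col ` I)"
    by (simp_all add: sub_rank_eq_dim)
  have "inj_on ?col I"
    by (rule eq_card_imp_inj_on[OF _ card_eq]) simp
  then show inj: "inj_on ?col P"
    using P by (rule inj_on_subset)
  have "independent (?col ` I)"
    using card_eq_dim[of "?col ` I" "?col ` I"] dim_eq span_superset[of "?col ` I"] by simp
  then have "independent (?col ` P)"
    using image_mono[OF P] by (rule independent_mono)
  then show "sub_rank U A P = card P"
    using dim_eq_card_independent card_image[OF inj] by (metis sub_rank_eq_dim)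
qed

lemma sub_rank_remove_row:
  fixes U :: "real^'n^'n"
  assumes "v \<in> A" and "sub_rank U A I = card I" and "P \<subseteq> I"
  shows "card P \<le> sub_rank U (A - {v}) P + 1"
proof -
  have "sub_rank U A P \<le> dim (insert (axis v 1) (masked_column U (A - {v}) ` P))"
    unfolding sub_rank_eq_dim
    using masked_columns_subset_span_remove_row[OF assms(1)] by (rule dim_mono)
  also have "\<dots> \<le> sub_rank U (A - {v}) P + 1"
    by (simp add: dim_insert sub_rank_eq_dim)
  finally show ?thesis
    using full_column_rank_subset(2)[OF assms(2,3)] by simp
qed

lemma sub_rank_remove_row_lt_imp_solution:
  fixes U :: "real^'n^'n"
  assumes v: "v \<in> A" and full: "sub_rank U A I = card I" and P: "P \<subseteq> I"
    and lt: "sub_rank U (A - {v}) P < card P"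
  obtains c :: "'n \<Rightarrow> real" where "\<And>i. i \<notin> P \<Longrightarrow> c i = 0"
    "\<And>w. w \<in> A \<Longrightarrow> (\<Sum>i\<in>P. U$w$i * c i) = (if w = v then 1 else 0)"
proof -
  let ?col = "masked_column U A" and ?e = "axis v (1::real)"
  let ?span = "span (insert ?e (masked_column U (A - {v}) ` P))"
  have "dim ?span \<le> sub_rank U (A - {v}) P + 1"
    by (simp add: dim_insert sub_rank_eq_dim)
  also have "\<dots> \<le> dim (?col ` P)"
    using lt full_column_rank_subset(2)[OF full P] by (simp add: sub_rank_eq_dim)
  finally have "span (?col ` P) = span ?span"
    using masked_columns_subset_span_remove_row[OF v] by (intro dim_eq_span) simp_all
  then have "?e \<in> span (?col ` P)"
    by (simp add: span_base)
  then obtain u where u: "(\<Sum>z\<in>?col ` P. u z *\<^sub>R z) = ?e"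
    by (auto simp: span_finite)
  define c where "c i = (if i \<in> P then u (?col i) else 0)" for i
  have "(\<Sum>i\<in>P. c i *\<^sub>R ?col i) = ?e"
    using u full_column_rank_subset(1)[OF full P] by (simp add: sum.reindex c_def)
  have "(\<Sum>i\<in>P. U$w$i * c i) = ?e $ w" if "w \<in> A" for w
  proof -
    have "(\<Sum>i\<in>P. c i *\<^sub>R ?col i) $ w = (\<Sum>i\<in>P. U$w$i * c i)"
      using that by (simp add: masked_column_def sum_component mult.commute)
    then show ?thesis
      using \<open>(\<Sum>i\<in>P. c i *\<^sub>R ?col i) = ?e\<close> by simp
  qed
  then show ?thesis
    using that[of c] by (simp add: c_def axis_def)
qed

lemma measurable_Iset:
  fixes F :: "'n::finite \<Rightarrow> real set"
  assumes F: "\<And>i. F i \<in> sets borel"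
  shows "Iset F \<in> borel \<rightarrow>\<^sub>M count_space UNIV"
proof (subst measurable_count_space_eq2)
  show "Iset F \<in> space borel \<rightarrow> UNIV \<and> (\<forall>P\<in>UNIV. Iset F -` {P} \<inter> space borel \<in> sets borel)"
  proof (intro conjI ballI)
    fix P :: "'n set"
    have "Iset F -` {P} \<inter> space borel = (\<Inter>i. if i \<in> P then F i else UNIV - F i)"
      unfolding Iset_def by (auto split: if_splits)
    also have "\<dots> \<in> sets borel"
      using F by (intro sets.finite_INT) auto
    finally show "Iset F -` {P} \<inter> space borel \<in> sets borel" .
  qed auto
qed simp

lemma borel_measurable_comp_Iset:
  fixes F :: "'n::finite \<Rightarrow> real set"
  shows "(\<And>i. F i \<in> sets borel) \<Longrightarrow> (\<lambda>f. \<phi> (Iset F f)) \<in> borel_measurable borel"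
  using measurable_compose[OF measurable_Iset, of F \<phi>] by simp

lemma Iset_subset_Iall: "f \<in> torus \<Longrightarrow> Iset F f \<subseteq> Iall F"
  unfolding Iall_def torus_def by auto

lemma bounded_measurable_borel:
  fixes g :: "real \<Rightarrow> real"
  shows "g \<in> borel_measurable borel \<Longrightarrow> (\<And>x. \<bar>g x\<bar> \<le> B) \<Longrightarrow> bounded_measurable g"
  unfolding bounded_measurable_def by (auto intro: measurable_restrict_space1)

lemma set_integral_subset_torus:
  fixes g :: "real \<Rightarrow> real"
  assumes "X \<subseteq> torus"
  shows "set_lebesgue_integral lborel X g = (\<integral>x. indicator X x * g x \<partial>lborel_torus)"
proof -
  have "(\<integral>x. indicator X x * g x \<partial>lborel_torus) = (\<integral>x. indicator torus x * (indicator X x * g x) \<partial>lborel)"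
    by (simp add: integral_restrict_space)
  also have "\<dots> = set_lebesgue_integral lborel X g"
    unfolding set_lebesgue_integral_def using assms
    by (intro Bochner_Integration.integral_cong) (auto simp: indicator_def)
  finally show ?thesis by simp
qed

lemma sum_measure_eq_set_integral_card_Iset:
  fixes F :: "'n::finite \<Rightarrow> real set"
  assumes F: "\<And>i. F i \<in> sets borel" "\<And>i. F i \<subseteq> torus"
  shows "(\<Sum>i\<in>UNIV. measure lborel (F i)) = (LINT f:(\<Union>i. F i)|lborel. real (card (Iset F f)))"
proof -
  have "(\<Sum>i\<in>UNIV. measure lborel (F i)) = (\<Sum>i\<in>UNIV. \<integral>x. indicator (F i) x \<partial>lborel_torus)"
    using F by (intro sum.cong refl integral_indicator_torus[symmetric])
  also have "\<dots> = (\<integral>x. (\<Sum>i\<in>UNIV. indicator (F i) x) \<partial>lborel_torus)"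
    using F(1) by (intro Bochner_Integration.integral_sum[symmetric] bounded_measurable_integrable
        bounded_measurable_borel[where B=1]) auto
  also have "\<dots> = (\<integral>x. indicator (\<Union>i. F i) x * real (card (Iset F x)) \<partial>lborel_torus)"
    by (intro Bochner_Integration.integral_cong)
       (auto simp: indicator_def Iset_def sum.If_cases)
  also have "\<dots> = (LINT f:(\<Union>i. F i)|lborel. real (card (Iset F f)))"
    using F(2) by (intro set_integral_subset_torus[symmetric]) auto
  finally show ?thesis .
qed

definition rank_drop_set :: "real^'n^'n \<Rightarrow> ('n \<Rightarrow> real set) \<Rightarrow> 'n set \<Rightarrow> 'n \<Rightarrow> real set" where
  "rank_drop_set U F A v = {f \<in> torus. sub_rank U (A - {v}) (Iset F f) < card (Iset F f)}"

lemma rank_drop_set_subset_torus: "rank_drop_set U F A v \<subseteq> torus"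
  unfolding rank_drop_set_def by auto

lemma rank_drop_set_sets:
  fixes F :: "'n::finite \<Rightarrow> real set"
  assumes "\<And>i. F i \<in> sets borel"
  shows "rank_drop_set U F A v \<in> sets borel"
proof -
  have "rank_drop_set U F A v = torus \<inter> (Iset F -` {P. sub_rank U (A - {v}) P < card P} \<inter> space borel)"
    unfolding rank_drop_set_def by auto
  also have "\<dots> \<in> sets borel"
    by (intro sets.Int torus_sets measurable_sets[OF measurable_Iset[OF assms]]) simp
  finally show ?thesis .
qed

lemma card_Iset_le_sub_rank_plus_indicator:
  fixes U :: "real^'n^'n"
  assumes "v \<in> A" "sub_rank U A (Iall F) = card (Iall F)" "f \<in> torus"
  shows "real (card (Iset F f)) \<le> real (sub_rank U (A - {v}) (Iset F f)) + indicator (rank_drop_set U F A v) f"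
  using sub_rank_remove_row[OF assms(1,2) Iset_subset_Iall[OF assms(3)]] assms(3)
  by (auto simp: rank_drop_set_def indicator_def)

lemma set_integral_card_Iset_le:
  fixes U :: "real^'n^'n" and F :: "'n \<Rightarrow> real set"
  assumes F: "\<And>i. F i \<in> sets borel" "\<And>i. F i \<subseteq> torus"
    and v: "v \<in> A" and full: "sub_rank U A (Iall F) = card (Iall F)"
  shows "(LINT f:(\<Union>i. F i)|lborel. real (card (Iset F f)))
    \<le> (LINT f:(\<Union>i. F i)|lborel. real (sub_rank U (A - {v}) (Iset F f)))
      + measure lborel (rank_drop_set U F A v)"
proof -
  let ?X = "\<Union>i. F i" and ?E = "rank_drop_set U F A v"
  let ?k = "\<lambda>f. indicator ?X f * real (card (Iset F f))"
  let ?r = "\<lambda>f. indicator ?X f * real (sub_rank U (A - {v}) (Iset F f))"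
  have X: "?X \<in> sets borel" "?X \<subseteq> torus"
    using F by auto
  have E: "?E \<in> sets borel"
    using F(1) by (rule rank_drop_set_sets)
  have bound: "\<bar>?k f\<bar> \<le> real CARD('n)" "\<bar>?r f\<bar> \<le> real CARD('n)" for f
    using dim_subset_UNIV_cart[of "masked_column U (A - {v}) ` Iset F f"]
    by (auto simp: indicator_def card_mono sub_rank_eq_dim)
  have meas: "?k \<in> borel_measurable borel" "?r \<in> borel_measurable borel"
    using X(1) F(1) by (auto intro!: borel_measurable_times borel_measurable_comp_Iset)
  have bounded: "bounded_measurable ?k" "bounded_measurable ?r"
    using bounded_measurable_borel[OF meas(1) bound(1)] bounded_measurable_borel[OF meas(2) bound(2)] .
  have bounded_E: "bounded_measurable (indicator ?E :: real \<Rightarrow> real)"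
    using E by (intro bounded_measurable_borel[where B=1]) auto
  have "?k x \<le> ?r x + indicator ?E x" if "x \<in> torus" for x
    using card_Iset_le_sub_rank_plus_indicator[OF v full that]
    by (cases "x \<in> ?X"; cases "x \<in> ?E") (simp_all add: indicator_def)
  then have "(\<integral>x. ?k x \<partial>lborel_torus) \<le> (\<integral>x. ?r x + indicator ?E x \<partial>lborel_torus)"
    by (intro integral_mono Bochner_Integration.integrable_add bounded_measurable_integrable
        bounded bounded_E) auto
  also have "\<dots> = (\<integral>x. ?r x \<partial>lborel_torus) + (\<integral>x. indicator ?E x \<partial>lborel_torus)"
    using bounded bounded_E by (simp add: bounded_measurable_integrable del: integral_indicator)
  also have "(\<integral>x. indicator ?E x \<partial>lborel_torus) = measure lborel ?E"
    using E rank_drop_set_subset_torus by (rule integral_indicator_torus)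
  finally show ?thesis
    using X(2) by (simp add: set_integral_subset_torus)
qed

lemma measure_rank_drop_set_ge:
  fixes U :: "real^'n^'n" and F :: "'n \<Rightarrow> real set"
  assumes "\<And>i. F i \<in> sets borel" "\<And>i. F i \<subseteq> torus"
    and "v \<in> Sp" "sub_rank U Sp (Iall F) = card (Iall F)"
  shows "(\<Sum>i\<in>UNIV. measure lborel (F i))
      - (LINT f:(\<Union>i. F i)|lborel. real (sub_rank U (Sp - {v}) (Iset F f)))
    \<le> measure lborel (rank_drop_set U F Sp v)"
  using sum_measure_eq_set_integral_card_Iset[of F, OF assms(1,2)]
    set_integral_card_Iset_le[of F, OF assms]
  by simp

section \<open>Stable sampling sets of graph signals\<close>

lemma infsum_vertex_le_energy_on:
  fixes X :: "'n::finite \<Rightarrow> int \<Rightarrow> complex"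
  assumes summable: "\<And>w. (\<lambda>n. (norm (X w n))^2) summable_on UNIV"
  shows "(\<Sum>\<^sub>\<infinity>n\<in>UNIV. (norm (X v n))^2) \<le> energy_on X UNIV"
proof -
  let ?h = "\<lambda>(w, n). (norm (X w n))^2"
  have "?h summable_on (\<Union>w\<in>UNIV. Pair w ` UNIV)"
  proof (rule summable_on_finite_union_disjoint)
    show "?h summable_on Pair w ` UNIV" for w
      using summable[of w] by (subst summable_on_reindex) (auto simp: inj_on_def o_def)
  qed auto
  moreover have "(\<Union>w\<in>UNIV. Pair w ` UNIV) = (UNIV :: ('n \<times> int) set)"
    by auto
  ultimately have "?h summable_on UNIV"
    by (simp only:)
  have "(\<Sum>\<^sub>\<infinity>n\<in>UNIV. (norm (X v n))^2) = infsum ?h (Pair v ` UNIV)"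
    by (subst infsum_reindex) (auto simp: inj_on_def o_def)
  also have "\<dots> \<le> infsum ?h UNIV"
  proof (rule infsum_mono_neutral)
    show "?h summable_on Pair v ` UNIV"
      by (rule summable_on_subset_banach[OF \<open>?h summable_on UNIV\<close>]) simp
  qed (use \<open>?h summable_on UNIV\<close> in \<open>auto split: prod.splits\<close>)
  finally show ?thesis
    unfolding energy_on_def .
qed

lemma energy_on_single_vertex:
  assumes "S \<subseteq> Sp \<times> UNIV" "\<And>w n. w \<in> Sp - {v} \<Longrightarrow> X w n = 0"
  shows "energy_on X S = (\<Sum>\<^sub>\<infinity>n\<in>{n. (v, n) \<in> S}. (norm (X v n))^2)"
proof -
  have "energy_on X S = (\<Sum>\<^sub>\<infinity>(w, n)\<in>Pair v ` {n. (v, n) \<in> S}. (norm (X w n))^2)"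
    unfolding energy_on_def
  proof (rule infsum_cong_neutral)
    fix x assume "x \<in> S - Pair v ` {n. (v, n) \<in> S}"
    then obtain w n where "x = (w, n)" "(w, n) \<in> S" "w \<noteq> v"
      by (cases x) auto
    then show "(case x of (w, n) \<Rightarrow> (norm (X w n))^2) = 0"
      using assms by auto
  qed auto
  also have "\<dots> = (\<Sum>\<^sub>\<infinity>n\<in>{n. (v, n) \<in> S}. (norm (X v n))^2)"
    by (subst infsum_reindex) (auto simp: inj_on_def o_def)
  finally show ?thesis .
qed

lemma fourier_coeff_synthesis:
  assumes "\<And>i. bounded_measurable (G i)"
  shows "(\<Sum>i\<in>UNIV. complex_of_real (U$w$i) * fourier_coeff (G i) n)
    = fourier_coeff (\<lambda>f. \<Sum>i\<in>UNIV. complex_of_real (U$w$i) * G i f) n"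
  using assms by (simp add: fourier_coeff_sum fourier_coeff_cmult bounded_measurable_intros)

lemma BL_D_synthesis:
  fixes U :: "real^'n^'n" and G :: "'n \<Rightarrow> real \<Rightarrow> complex"
  assumes bounded: "\<And>i. bounded_measurable (G i)" and meas: "\<And>i. G i \<in> borel_measurable lborel"
    and band: "\<And>i f. f \<in> torus - F i \<Longrightarrow> G i f = 0"
  shows "BL_D U F (\<lambda>w n. \<Sum>i\<in>UNIV. complex_of_real (U$w$i) * fourier_coeff (G i) n)"
  unfolding BL_D_def
proof (intro conjI allI ballI exI[of _ G])
  show "(\<lambda>n. (norm (\<Sum>i\<in>UNIV. complex_of_real (U$w$i) * fourier_coeff (G i) n))^2) summable_on UNIV"
    for w
    unfolding fourier_coeff_synthesis[OF bounded]
    by (intro summable_on_fourier_coeff bounded_measurable_intros bounded)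
  show "set_integrable lborel {-1/2..<1/2} (\<lambda>f. (norm (G i f))^2)" for i
    using set_integrable_torus_iff[of "\<lambda>f. (norm (G i f))^2"]
      bounded_measurable_integrable[OF bounded_measurable_norm_power2[OF bounded[of i]]]
    by (simp add: torus_def)
  show "G i f = 0" if "f \<in> {-1/2..<1/2} - F i" for i f
    using band that by (simp add: torus_def)
  show "G i \<in> borel_measurable lborel" for i
    by (rule meas)
qed (simp add: idtft_eq_fourier_coeff)

lemma interpolating_coeffs_exist:
  fixes U :: "real^'n^'n" and F :: "'n \<Rightarrow> real set"
  assumes F: "\<And>i. F i \<in> sets borel" and v: "v \<in> Sp" and full: "sub_rank U Sp (Iall F) = card (Iall F)"
  obtains c :: "'n \<Rightarrow> real \<Rightarrow> real" where
    "\<And>i. c i \<in> borel_measurable borel" "\<And>i. bounded_measurable (\<lambda>f. complex_of_real (c i f))"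
    "\<And>i f. i \<notin> Iset F f \<Longrightarrow> c i f = 0"
    "\<And>w f. w \<in> Sp \<Longrightarrow> f \<in> rank_drop_set U F Sp v \<Longrightarrow>
      (\<Sum>i\<in>UNIV. U$w$i * c i f) = (if w = v then 1 else 0)"
proof -
  let ?E = "rank_drop_set U F Sp v"
  \<comment> \<open>The solution is chosen per support set; as there are finitely many, c is measurable.\<close>
  define solves where "solves P c \<longleftrightarrow> (\<forall>i. i \<notin> P \<longrightarrow> c i = 0) \<and>
      (\<forall>w\<in>Sp. (\<Sum>i\<in>P. U$w$i * c i) = (if w = v then 1 else 0))" for P and c :: "'n \<Rightarrow> real"
  define C where "C P = (SOME c. solves P c)" for P
  have C: "solves (Iset F f) (C (Iset F f))" if "f \<in> ?E" for f
  proof -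
    have "f \<in> torus" "sub_rank U (Sp - {v}) (Iset F f) < card (Iset F f)"
      using that by (auto simp: rank_drop_set_def)
    then have "\<exists>c. solves (Iset F f) c"
      unfolding solves_def
      using sub_rank_remove_row_lt_imp_solution[OF v full Iset_subset_Iall] by metis
    then show ?thesis
      unfolding C_def by (rule someI_ex)
  qed
  define c where "c i f = indicator ?E f * C (Iset F f) i" for i f
  have meas: "c i \<in> borel_measurable borel" for i
    unfolding c_def using rank_drop_set_sets[OF F]
    by (intro borel_measurable_times borel_measurable_indicator borel_measurable_comp_Iset F)
  have "\<bar>c i f\<bar> \<le> (\<Sum>P\<in>UNIV. \<bar>C P i\<bar>)" for i f
    unfolding c_def indicator_def by (auto intro: member_le_sum)
  then have "bounded_measurable (\<lambda>f. complex_of_real (c i f))" for i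
    using meas[of i] unfolding bounded_measurable_def
    by (auto intro!: measurable_restrict_space1)
  moreover have "c i f = 0" if "i \<notin> Iset F f" for i f
    using C[of f] that unfolding c_def solves_def by (auto simp: indicator_def)
  moreover have "(\<Sum>i\<in>UNIV. U$w$i * c i f) = (if w = v then 1 else 0)"
    if "w \<in> Sp" "f \<in> ?E" for w f
  proof -
    have "(\<Sum>i\<in>UNIV. U$w$i * c i f) = (\<Sum>i\<in>UNIV. U$w$i * C (Iset F f) i)"
      using that(2) by (simp add: c_def)
    also have "\<dots> = (\<Sum>i\<in>Iset F f. U$w$i * C (Iset F f) i)"
      using C[OF that(2)] unfolding solves_def by (intro sum.mono_neutral_right) auto
    finally show ?thesis
      using C[OF that(2)] that(1) unfolding solves_def by simp
  qed
  ultimately show ?thesis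
    using that meas by blast
qed

lemma sampling_set_rank_drop_set:
  fixes U :: "real^'n^'n" and F :: "'n \<Rightarrow> real set"
  assumes F: "\<And>i. F i \<in> sets borel" and v: "v \<in> Sp"
    and full: "sub_rank U Sp (Iall F) = card (Iall F)"
    and S: "S \<subseteq> Sp \<times> UNIV" and stable: "stable_sampling U F S A A'"
  shows "sampling_set (rank_drop_set U F Sp v) {n. (v, n) \<in> S} A"
  unfolding sampling_set_def
proof (intro allI impI, elim conjE)
  let ?E = "rank_drop_set U F Sp v"
  fix g :: "real \<Rightarrow> complex"
  assume g: "bounded_measurable g" and g_E: "\<forall>x. x \<notin> ?E \<longrightarrow> g x = 0"
  obtain c where c_meas: "\<And>i. c i \<in> borel_measurable borel"
    and c_bounded: "\<And>i. bounded_measurable (\<lambda>f. complex_of_real (c i f))"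
    and c_band: "\<And>i f. i \<notin> Iset F f \<Longrightarrow> c i f = 0"
    and c_interp: "\<And>w f. w \<in> Sp \<Longrightarrow> f \<in> ?E \<Longrightarrow> (\<Sum>i\<in>UNIV. U$w$i * c i f) = (if w = v then 1 else 0)"
    using interpolating_coeffs_exist[OF F v full] by blast
  define G where "G i f = complex_of_real (c i f) * g f" for i f
  define X where "X w n = (\<Sum>i\<in>UNIV. complex_of_real (U$w$i) * fourier_coeff (G i) n)" for w n
  have G_bounded: "bounded_measurable (G i)" for i
    unfolding G_def using c_bounded g by (rule bounded_measurable_mult)
  have "g \<in> borel_measurable lborel"
    using g g_E rank_drop_set_subset_torus[of U F Sp v]
    by (intro borel_measurable_if_vanishing_off_torus) auto
  then have G_meas: "G i \<in> borel_measurable lborel" for i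
    unfolding G_def using c_meas[of i] by measurable
  have "BL_D U F X"
    unfolding X_def using G_bounded G_meas
    by (rule BL_D_synthesis) (auto simp: G_def c_band Iset_def)
  then have summable: "\<And>w. (\<lambda>n. (norm (X w n))^2) summable_on UNIV" and
    "A * energy_on X UNIV \<le> energy_on X S"
    using stable unfolding BL_D_def stable_sampling_def by auto
  have X_vertex: "X w n = (if w = v then fourier_coeff g n else 0)" if "w \<in> Sp" for w n
  proof -
    have "(\<Sum>i\<in>UNIV. complex_of_real (U$w$i) * G i f) = (if w = v then g f else 0)" for f
    proof -
      have "(\<Sum>i\<in>UNIV. complex_of_real (U$w$i) * G i f) = complex_of_real (\<Sum>i\<in>UNIV. U$w$i * c i f) * g f"
        unfolding G_def by (simp add: sum_distrib_right mult.assoc)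
      then show ?thesis
        using c_interp[OF that, of f] g_E by (cases "f \<in> ?E") auto
    qed
    then show ?thesis
      unfolding X_def fourier_coeff_synthesis[OF G_bounded] by (simp add: fourier_coeff_def)
  qed
  have "A * (\<Sum>\<^sub>\<infinity>n\<in>UNIV. (norm (fourier_coeff g n))^2) \<le> A * energy_on X UNIV"
    using infsum_vertex_le_energy_on[of X v, OF summable] X_vertex[OF v] stable
    by (simp add: stable_sampling_def)
  also have "\<dots> \<le> energy_on X S"
    by fact
  also have "\<dots> = (\<Sum>\<^sub>\<infinity>n\<in>{n. (v, n) \<in> S}. (norm (fourier_coeff g n))^2)"
    using energy_on_single_vertex[where X = X and v = v, OF S] X_vertex v by simp
  finally show "A * (\<Sum>\<^sub>\<infinity>n\<in>UNIV. (norm (fourier_coeff g n))^2)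
      \<le> (\<Sum>\<^sub>\<infinity>n\<in>{n. (v, n) \<in> S}. (norm (fourier_coeff g n))^2)" .
qed

theorem corollary5:
  fixes W U :: "real^'n^'n" and F :: "'n \<Rightarrow> real set" and Sp :: "'n set"
    and S :: "('n \<times> int) set" and A A' :: real and v :: 'n
  assumes "undirected_weights W"
    and "laplacian_eigvecs W U"
    and "\<forall>i. F i \<in> sets lborel \<and> F i \<subseteq> {-1/2..<1/2}"
    and "card Sp = card (Iall F)"
    and "sub_rank U Sp (Iall F) = card (Iall F)"
    and "S \<subseteq> Sp \<times> UNIV"
    and "stable_sampling U F S A A'"
    and "v \<in> Sp"
  shows "R_D {n. (v, n) \<in> S} \<ge>
    ereal ((\<Sum>i\<in>UNIV. measure lborel (F i))
       - (LINT f:(\<Union>i. F i)|lborel. real (sub_rank U (Sp - {v}) (Iset F f))))"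
proof -
  let ?E = "rank_drop_set U F Sp v"
  have F: "\<And>i. F i \<in> sets borel" "\<And>i. F i \<subseteq> torus"
    using assms(3) by (auto simp: torus_def)
  have "(\<Sum>i\<in>UNIV. measure lborel (F i))
      - (LINT f:(\<Union>i. F i)|lborel. real (sub_rank U (Sp - {v}) (Iset F f))) \<le> measure lborel ?E"
    using F assms(8,5) by (rule measure_rank_drop_set_ge)
  also have "ereal (measure lborel ?E) \<le> R_D {n. (v, n) \<in> S}"
  proof (rule landau_density_bound)
    show "sampling_set ?E {n. (v, n) \<in> S} A"
      using F(1) assms(8,5,6,7) by (rule sampling_set_rank_drop_set)
  qed (use assms(7) F(1) in \<open>simp_all add: stable_sampling_def rank_drop_set_sets rank_drop_set_subset_torus\<close>)
  finally show ?thesis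
    by simp
qed

end
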